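(* Let $H$ be a $2$-transitive affine permutation group of degree $2^6$ on a set $\Omega$, and let $1\ne K\unlhd H$. Assume that $K_\alpha\ne 1$ for $\alpha\in\Omega$, and $K$ is imprimitive on $\Omega$. Then (1) $K_\alpha\cong\mathbb{Z}_s$ with $s\in\{3,7\}$, and there is $x\in H_\alpha$ such that $K_\alpha\langle x\rangle\cong\mathbb{Z}_{21}$; and (2) for each $x\in H_\alpha$ with $K_\alpha\langle x\rangle\cong\mathbb{Z}_{21}$, the subgroup $K\langle x\rangle$ is primitive on $\Omega$.
   Context: An affine permutation group of degree $2^6$ is a permutation group on a set of size $2^6$ having a regular normal subgroup isomorphic to $\mathbb{Z}_2^6$. $H_\alpha$, $K_\alpha$ denote point stabilizers. *)

theory Defs
  imports "HOL-Algebra.Algebra"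
begin

definition perm_gr :: "'a set \<Rightarrow> ('a \<Rightarrow> 'a) set \<Rightarrow> ('a \<Rightarrow> 'a) monoid" where
  "perm_gr \<Omega> S = (BijGroup \<Omega>)\<lparr>carrier := S\<rparr>"

definition perm_group :: "'a set \<Rightarrow> ('a \<Rightarrow> 'a) set \<Rightarrow> bool" where
  "perm_group \<Omega> G \<longleftrightarrow> subgroup G (BijGroup \<Omega>)"

definition pstab :: "('a \<Rightarrow> 'a) set \<Rightarrow> 'a \<Rightarrow> ('a \<Rightarrow> 'a) set" where
  "pstab G \<alpha> = {g \<in> G. g \<alpha> = \<alpha>}"

text \<open>subgroup generated by a set of permutations, e.g. K<x> = gen_perm Omega (insert x K)\<close>
definition gen_perm :: "'a set \<Rightarrow> ('a \<Rightarrow> 'a) set \<Rightarrow> ('a \<Rightarrow> 'a) set" where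
  "gen_perm \<Omega> S = generate (BijGroup \<Omega>) S"

definition transitive_on :: "'a set \<Rightarrow> ('a \<Rightarrow> 'a) set \<Rightarrow> bool" where
  "transitive_on \<Omega> G \<longleftrightarrow> (\<forall>\<alpha>\<in>\<Omega>. \<forall>\<beta>\<in>\<Omega>. \<exists>g\<in>G. g \<alpha> = \<beta>)"

definition two_transitive_on :: "'a set \<Rightarrow> ('a \<Rightarrow> 'a) set \<Rightarrow> bool" where
  "two_transitive_on \<Omega> G \<longleftrightarrow>
     (\<forall>\<alpha>\<in>\<Omega>. \<forall>\<beta>\<in>\<Omega>. \<forall>\<gamma>\<in>\<Omega>. \<forall>\<delta>\<in>\<Omega>. \<alpha> \<noteq> \<beta> \<longrightarrow> \<gamma> \<noteq> \<delta> \<longrightarrow>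
        (\<exists>g\<in>G. g \<alpha> = \<gamma> \<and> g \<beta> = \<delta>))"

definition regular_on :: "'a set \<Rightarrow> ('a \<Rightarrow> 'a) set \<Rightarrow> bool" where
  "regular_on \<Omega> G \<longleftrightarrow> transitive_on \<Omega> G \<and> (\<forall>\<alpha>\<in>\<Omega>. pstab G \<alpha> = {\<one>\<^bsub>BijGroup \<Omega>\<^esub>})"

definition is_block :: "'a set \<Rightarrow> ('a \<Rightarrow> 'a) set \<Rightarrow> 'a set \<Rightarrow> bool" where
  "is_block \<Omega> G B \<longleftrightarrow> B \<subseteq> \<Omega> \<and> B \<noteq> {} \<and> (\<forall>g\<in>G. g ` B = B \<or> g ` B \<inter> B = {})"

definition primitive_on :: "'a set \<Rightarrow> ('a \<Rightarrow> 'a) set \<Rightarrow> bool" where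
  "primitive_on \<Omega> G \<longleftrightarrow> transitive_on \<Omega> G \<and>
     (\<forall>B. is_block \<Omega> G B \<longrightarrow> card B = 1 \<or> B = \<Omega>)"

definition imprimitive_on :: "'a set \<Rightarrow> ('a \<Rightarrow> 'a) set \<Rightarrow> bool" where
  "imprimitive_on \<Omega> G \<longleftrightarrow> transitive_on \<Omega> G \<and> \<not> primitive_on \<Omega> G"

definition Z2_6 :: "(nat \<Rightarrow> int) monoid" where
  "Z2_6 = product_group {..<6} (\<lambda>_. integer_mod_group 2)"

definition affine_perm_group_2_6 :: "'a set \<Rightarrow> ('a \<Rightarrow> 'a) set \<Rightarrow> bool" where
  "affine_perm_group_2_6 \<Omega> H \<longleftrightarrow> finite \<Omega> \<and> card \<Omega> = 2^6 \<and> perm_group \<Omega> H \<and>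
     (\<exists>N. N \<lhd> perm_gr \<Omega> H \<and> regular_on \<Omega> N \<and> perm_gr \<Omega> N \<cong> Z2_6)"

end

(*
  Identify Omega with the regular normal subgroup N via n |-> n alpha; then H_alpha acts on N by
  conjugation, transitively on N - {1}. As K_alpha <> 1, the commutators [K_alpha, N] show that K
  meets N, hence K contains N. A nontrivial block of K through alpha is the orbit of alpha under a
  proper nontrivial K_alpha-invariant subgroup of N. Two H_alpha-conjugates of a minimal such
  subgroup are equal or meet trivially, which forces the stabilisers in K_alpha of all points
  beta <> alpha to coincide; the common stabiliser fixes everything, so K_alpha is semiregular on
  Omega - {alpha}. Hence |K_alpha| divides 63 and |B| - 1 for a block size |B| dividing 64, so
  |K_alpha| is 3 or 7. The class equation of H_alpha, whose order is divisible by 63, gives an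
  element x of order q = 21/|K_alpha| centralising K_alpha, and K_alpha<x> is cyclic of order 21.

  For part (2), let s <> 1 in L = K_alpha<x> fix a point beta <> alpha. The power s^q lies in
  K_alpha and fixes beta, so s^q = 1. The fixed points of s correspond to its centraliser in N, so
  their number f divides 64; moreover |K_alpha| divides f - 1 and q divides 64 - f, which forces
  f = 1, a contradiction. Thus L is semiregular on Omega - {alpha}, and a block of K<x> through
  alpha has a size dividing 64 and congruent to 1 mod 21, that is 1 or 64.
*)

theory Submission
  imports Defs
begin

section \<open>Divisibility facts about 63 and 64\<close>

lemma dvd_64_cases:
  assumes "(c::nat) dvd 64"
  shows "c \<in> {1, 2, 4, 8, 16, 32, 64}"
proof -
  obtain i where "i \<le> 6" "c = 2 ^ i"
    using divides_primepow_nat[of 2 c 6] assms by auto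
  moreover have "i = 0 \<or> i = 1 \<or> i = 2 \<or> i = 3 \<or> i = 4 \<or> i = 5 \<or> i = 6"
    using \<open>i \<le> 6\<close> by linarith
  ultimately show ?thesis by auto
qed

lemma divisor_of_63_dvd_pred_of_dvd_64:
  assumes "(c::nat) dvd 64" "1 < c" "c < 64" "k dvd 63" "k dvd c - 1"
  shows "k \<in> {1, 3, 7}"
proof -
  have "c - 1 \<in> {1, 3, 7, 15, 31}"
    using dvd_64_cases[OF assms(1)] assms(2,3) by auto
  then have "gcd 63 (c - 1) \<in> {1, 3, 7}"
    by (auto simp: gcd_non_0_nat)
  moreover have "k dvd gcd 63 (c - 1)"
    using assms(4,5) by simp
  ultimately have "k dvd 1 \<or> k dvd 3 \<or> k dvd 7"
    by (metis empty_iff insert_iff)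
  moreover have "Factorial_Ring.prime (3::nat)" "Factorial_Ring.prime (7::nat)"
    by simp_all
  ultimately show ?thesis
    unfolding prime_nat_iff by auto
qed

lemma dvd_64_trivial_of_dvd_pred_and_dvd_compl:
  assumes "(f::nat) dvd 64" "p dvd f - 1" "q dvd 64 - f" "(p = 3 \<and> q = 7) \<or> (p = 7 \<and> q = 3)"
  shows "f = 1 \<or> f = 64"
  using dvd_64_cases[OF assms(1)] assms(2-4) by auto

lemma dvd_64_trivial_of_21_dvd_pred:
  assumes "(f::nat) dvd 64" "21 dvd f - 1"
  shows "f = 1 \<or> f = 64"
  using dvd_64_cases[OF assms(1)] assms(2) by auto

lemma div_21_dvd_of_63_dvd_mult:
  assumes "63 dvd m * (c::nat)" "0 < m" "m < p" "p = 3 \<or> p = 7"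
  shows "21 div p dvd c"
  using assms(4)
proof
  assume p: "p = 3"
  then have "m = 1 \<or> m = 2"
    using assms(2,3) by linarith
  then have "7 dvd c"
    using assms(1) by (elim disjE; simp; presburger)
  then show ?thesis
    using p by simp
next
  assume p: "p = 7"
  then have "m = 1 \<or> m = 2 \<or> m = 3 \<or> m = 4 \<or> m = 5 \<or> m = 6"
    using assms(2,3) by linarith
  then have "3 dvd c"
    using assms(1) by (elim disjE; simp; presburger)
  then show ?thesis
    using p by simp
qed

section \<open>Finite groups\<close>

lemma card_pow_eq_one_iso:
  assumes \<phi>: "\<phi> \<in> iso A B" and A: "group A" and B: "group B"
  shows "card {a \<in> carrier A. a [^]\<^bsub>A\<^esub> (d::nat) = \<one>\<^bsub>A\<^esub>} = card {b \<in> carrier B. b [^]\<^bsub>B\<^esub> d = \<one>\<^bsub>B\<^esub>}"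
proof -
  have inj: "inj_on \<phi> (carrier A)" and surj: "\<phi> ` carrier A = carrier B"
    using iso_iff[THEN iffD1, OF \<phi>] by auto
  interpret group_hom A B \<phi>
    using \<phi> A B by (simp add: group_hom_def group_hom_axioms_def iso_iff)
  have img: "\<phi> ` {a \<in> carrier A. a [^]\<^bsub>A\<^esub> d = \<one>\<^bsub>A\<^esub>} = {b \<in> carrier B. b [^]\<^bsub>B\<^esub> d = \<one>\<^bsub>B\<^esub>}"
  proof (intro equalityI subsetI)
    fix b
    assume "b \<in> \<phi> ` {a \<in> carrier A. a [^]\<^bsub>A\<^esub> d = \<one>\<^bsub>A\<^esub>}"
    then obtain a where "a \<in> carrier A" "a [^]\<^bsub>A\<^esub> d = \<one>\<^bsub>A\<^esub>" "b = \<phi> a"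
      by blast
    then show "b \<in> {b \<in> carrier B. b [^]\<^bsub>B\<^esub> d = \<one>\<^bsub>B\<^esub>}"
      by (simp flip: hom_nat_pow)
  next
    fix b
    assume b: "b \<in> {b \<in> carrier B. b [^]\<^bsub>B\<^esub> d = \<one>\<^bsub>B\<^esub>}"
    then obtain a where a: "a \<in> carrier A" "b = \<phi> a"
      using surj by blast
    then have "\<phi> (a [^]\<^bsub>A\<^esub> d) = \<phi> \<one>\<^bsub>A\<^esub>"
      using b by (simp add: hom_nat_pow)
    moreover have "a [^]\<^bsub>A\<^esub> d \<in> carrier A" "\<one>\<^bsub>A\<^esub> \<in> carrier A"
      using a(1) monoid.nat_pow_closed[OF group.is_monoid[OF A]]
        monoid.one_closed[OF group.is_monoid[OF A]] by auto
    ultimately have "a [^]\<^bsub>A\<^esub> d = \<one>\<^bsub>A\<^esub>"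
      by (rule inj_onD[OF inj])
    then show "b \<in> \<phi> ` {a \<in> carrier A. a [^]\<^bsub>A\<^esub> d = \<one>\<^bsub>A\<^esub>}"
      using a by blast
  qed
  have "inj_on \<phi> {a \<in> carrier A. a [^]\<^bsub>A\<^esub> d = \<one>\<^bsub>A\<^esub>}"
    using inj by (rule inj_on_subset) blast
  then show ?thesis
    using card_image img by fastforce
qed

lemma card_pow_eq_zero_integer_mod_group:
  assumes "d dvd n" "0 < n"
  shows "card {i \<in> carrier (integer_mod_group n). i [^]\<^bsub>integer_mod_group n\<^esub> d = 0} = d"
proof -
  obtain e where n: "n = d * e"
    using assms(1) by blast
  then have pos: "0 < d" "0 < e"
    using assms(2) by auto
  have "{i \<in> carrier (integer_mod_group n). i [^]\<^bsub>integer_mod_group n\<^esub> d = 0}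
      = {i \<in> {0..<int d * int e}. int d * int e dvd int d * i}"
    using n pos by (auto simp: carrier_integer_mod_group dvd_eq_mod_eq_0)
  also have "\<dots> = (\<lambda>j. int e * j) ` {0..<int d}"
  proof (intro equalityI subsetI)
    fix i
    assume "i \<in> {i \<in> {0..<int d * int e}. int d * int e dvd int d * i}"
    then have "int e dvd i" "0 \<le> i" "i < int e * int d"
      using pos by (auto simp: mult.commute)
    then obtain j where j: "i = int e * j" "0 \<le> int e * j" "int e * j < int e * int d"
      by blast
    then have "j \<in> {0..<int d}"
      using pos by (simp add: zero_le_mult_iff mult_less_cancel_left_pos)
    then show "i \<in> (\<lambda>j. int e * j) ` {0..<int d}"
      using j(1) by blast
  next
    fix i
    assume "i \<in> (\<lambda>j. int e * j) ` {0..<int d}"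
    then obtain j where "j \<in> {0..<int d}" "i = int e * j"
      by blast
    then show "i \<in> {i \<in> {0..<int d * int e}. int d * int e dvd int d * i}"
      using pos by (auto simp: mult.commute[of "int d"])
  qed
  finally show ?thesis
    using pos by (simp add: card_image inj_on_def)
qed

context group
begin

lemma inv_mult_cancel_left [simp]: "x \<in> carrier G \<Longrightarrow> y \<in> carrier G \<Longrightarrow> inv x \<otimes> (x \<otimes> y) = y"
  by (simp flip: m_assoc)

lemma mult_inv_cancel_left [simp]: "x \<in> carrier G \<Longrightarrow> y \<in> carrier G \<Longrightarrow> x \<otimes> (inv x \<otimes> y) = y"
  by (simp flip: m_assoc)

lemma mem_conj_coset: "x \<in> g <# W #> inv g \<longleftrightarrow> (\<exists>w\<in>W. x = g \<otimes> w \<otimes> inv g)"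
  by (auto simp: l_coset_def r_coset_def)

lemma conj_coset_eq_image: "g <# W #> inv g = (\<lambda>w. g \<otimes> w \<otimes> inv g) ` W"
  unfolding set_eq_iff mem_conj_coset by blast

lemma card_conj_coset:
  assumes "g \<in> carrier G" "W \<subseteq> carrier G"
  shows "card (g <# W #> inv g) = card W"
  unfolding conj_coset_eq_image using assms
  by (intro card_image inj_onI) (meson conjugation_is_inj subsetD)

lemma subgroup_nat_pow_closed:
  assumes "subgroup S G" "x \<in> S"
  shows "x [^] (n::nat) \<in> S"
  by (induction n) (simp_all add: assms subgroup.one_closed subgroup.m_closed)

lemma commute_of_mem_generate_singleton:
  assumes "s \<in> carrier G" "d \<in> generate G {s}"
  shows "d \<otimes> s = s \<otimes> d"
proof -
  obtain k :: int where "d = s [^] k"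
    using assms generate_pow by auto
  then show ?thesis
    using assms(1) int_pow_mult[of s k 1] int_pow_mult[of s 1 k] by (simp add: add.commute)
qed

lemma card_subgroup_dvd:
  assumes "subgroup I G" "subgroup J G" "I \<subseteq> J"
  shows "card I dvd card J"
proof -
  interpret J: group "G\<lparr>carrier := J\<rparr>"
    using assms(2) is_group by (rule subgroup.subgroup_is_group)
  have "card (rcosets\<^bsub>G\<lparr>carrier := J\<rparr>\<^esub> I) * card I = order (G\<lparr>carrier := J\<rparr>)"
    using subgroup_incl[OF assms] by (rule J.lagrange)
  then have "card (rcosets\<^bsub>G\<lparr>carrier := J\<rparr>\<^esub> I) * card I = card J"
    by (simp add: order_def)
  then show ?thesis
    by (metis dvd_triv_right)
qed

lemma ord_dvd_card_subgroup:
  assumes "subgroup S G" "x \<in> S"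
  shows "ord x dvd card S"
proof -
  have x: "x \<in> carrier G"
    using assms by (rule subgroup.mem_carrier)
  have "card (generate G {x}) dvd card S"
    using x assms by (intro card_subgroup_dvd generate_is_subgroup generate_subgroup_incl) auto
  then show ?thesis
    using generate_pow_card[OF x] by simp
qed

lemma ord_eq_prime:
  assumes "x \<in> carrier G" "x \<noteq> \<one>" "x [^] p = \<one>" "Factorial_Ring.prime (p::nat)"
  shows "ord x = p"
proof -
  have "ord x dvd p" "ord x \<noteq> 1"
    using assms pow_eq_id ord_eq_1 by auto
  then show ?thesis
    using assms(4) prime_nat_iff by blast
qed

lemma prime_card_subgroup_generate:
  assumes S: "subgroup S G" and p: "Factorial_Ring.prime (card S)" and g: "g \<in> S" "g \<noteq> \<one>"
  shows "ord g = card S" "generate G {g} = S"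
proof -
  have gc: "g \<in> carrier G"
    using S g(1) by (rule subgroup.mem_carrier)
  have "ord g dvd card S" "ord g \<noteq> 1"
    using ord_dvd_card_subgroup[OF S g(1)] ord_eq_1[OF gc] g(2) by auto
  then show ord: "ord g = card S"
    using p prime_nat_iff by blast
  have "finite S"
    using prime_gt_0_nat[OF p] card_gt_0_iff by blast
  moreover have "generate G {g} \<subseteq> S"
    using S g(1) by (intro generate_subgroup_incl) auto
  moreover have "card (generate G {g}) = card S"
    using ord generate_pow_card[OF gc] by simp
  ultimately show "generate G {g} = S"
    by (rule card_subset_eq)
qed

lemma exists_ord_eq_prime:
  assumes fin: "finite (carrier G)" and S: "subgroup S G"
    and p: "Factorial_Ring.prime p" "p dvd card S"
  shows "\<exists>y\<in>S. ord y = p"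
proof -
  interpret S: group "G\<lparr>carrier := S\<rparr>"
    using S is_group by (rule subgroup.subgroup_is_group)
  have "order (G\<lparr>carrier := S\<rparr>) = p ^ 1 * (card S div p)"
    using p(2) by (simp add: order_def)
  moreover have "finite (carrier (G\<lparr>carrier := S\<rparr>))"
    using fin S subgroup.subset finite_subset by fastforce
  ultimately obtain P where P: "subgroup P (G\<lparr>carrier := S\<rparr>)" "card P = p"
    using sylow_thm[OF p(1) S.is_group] by (metis power_one_right)
  have PG: "subgroup P G" and PS: "P \<subseteq> S"
    using incl_subgroup[OF S P(1)] subgroup.subset[OF P(1)] by auto
  have "P \<noteq> {\<one>}"
    using P(2) p(1) by auto
  then obtain y where y: "y \<in> P" "y \<noteq> \<one>"
    using subgroup.one_closed[OF PG] by blast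
  then have "ord y = p"
    using prime_card_subgroup_generate[OF PG] P(2) p(1) by simp
  then show ?thesis
    using y(1) PS by blast
qed

lemma int_pow_mod_ord:
  assumes "z \<in> carrier G"
  shows "z [^] (k mod int (ord z)) = z [^] k"
  using int_pow_eq[OF assms] by (metis mod_eq_dvd_iff mod_mod_trivial)

lemma bij_betw_int_pow_generate:
  assumes z: "z \<in> carrier G" "0 < ord z"
  shows "bij_betw (\<lambda>i. z [^] i) {0..<int (ord z)} (generate G {z})"
proof (rule bij_betw_imageI)
  show "inj_on (\<lambda>i. z [^] i) {0..<int (ord z)}"
  proof (rule inj_onI)
    fix a b :: int
    assume "a \<in> {0..<int (ord z)}" "b \<in> {0..<int (ord z)}" "z [^] a = z [^] b"
    then show "a = b"
      using int_pow_eq[OF z(1)] by (metis atLeastLessThan_iff mod_eq_dvd_iff mod_pos_pos_trivial)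
  qed
  have "z [^] k \<in> (\<lambda>i. z [^] i) ` {0..<int (ord z)}" for k :: int
  proof -
    have "k mod int (ord z) \<in> {0..<int (ord z)}"
      using z(2) by simp
    then show ?thesis
      using int_pow_mod_ord[OF z(1), of k] by (metis image_eqI)
  qed
  then show "(\<lambda>i. z [^] i) ` {0..<int (ord z)} = generate G {z}"
    using generate_pow[OF z(1)] by auto
qed

lemma generate_iso_integer_mod_group:
  assumes z: "z \<in> carrier G" "0 < ord z"
  shows "G\<lparr>carrier := generate G {z}\<rparr> \<cong> integer_mod_group (ord z)"
proof -
  have "(\<lambda>i. z [^] i) \<in> hom (integer_mod_group (ord z)) (G\<lparr>carrier := generate G {z}\<rparr>)"
  proof (rule homI)
    fix i j :: int
    show "z [^] (i \<otimes>\<^bsub>integer_mod_group (ord z)\<^esub> j) = z [^] i \<otimes>\<^bsub>G\<lparr>carrier := generate G {z}\<rparr>\<^esub> z [^] j"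
      using int_pow_mod_ord[OF z(1)] z(1) by (simp add: int_pow_mult)
  qed (use generate_pow[OF z(1)] in auto)
  moreover have "bij_betw (\<lambda>i. z [^] i) (carrier (integer_mod_group (ord z))) (generate G {z})"
    using bij_betw_int_pow_generate[OF z] z(2) by (simp add: carrier_integer_mod_group)
  ultimately have "integer_mod_group (ord z) \<cong> G\<lparr>carrier := generate G {z}\<rparr>"
    by (intro is_isoI isoI) simp_all
  then show ?thesis
    by (rule group.iso_sym[OF group_integer_mod_group])
qed

lemma mem_generate_mult_of_coprime:
  assumes fin: "finite (carrier G)" and xy: "x \<in> carrier G" "y \<in> carrier G" "x \<otimes> y = y \<otimes> x"
    and cop: "coprime (ord x) (ord y)"
  shows "x \<in> generate G {x \<otimes> y}"
proof -
  obtain s t where st: "ord y * s = ord x * t + 1"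
    using bezout_nat[of "ord y" "ord x"] ord_ge_1[OF fin xy(2)] cop
    by (auto simp: coprime_iff_gcd_eq_1 gcd.commute)
  have "x [^] (ord y * s) = x [^] (ord x * t) \<otimes> x [^] (1::nat)"
    using st xy(1) by (simp add: nat_pow_mult)
  then have "x [^] (ord y * s) = x"
    using xy(1) by (simp add: nat_pow_pow[symmetric])
  moreover have "y [^] (ord y * s) = \<one>"
    using xy(2) by (simp add: nat_pow_pow[symmetric])
  ultimately have "x = (x \<otimes> y) [^] (ord y * s)"
    using pow_mult_distrib[OF xy(3,1,2)] xy by simp
  moreover have "subgroup (generate G {x \<otimes> y}) G"
    using xy by (intro generate_is_subgroup) simp
  moreover have "x \<otimes> y \<in> generate G {x \<otimes> y}"
    by (rule generate.incl) simp
  ultimately show ?thesis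
    using subgroup_nat_pow_closed by metis
qed

lemma ord_mult_of_coprime:
  assumes fin: "finite (carrier G)" and xy: "x \<in> carrier G" "y \<in> carrier G" "x \<otimes> y = y \<otimes> x"
    and cop: "coprime (ord x) (ord y)"
  shows "ord (x \<otimes> y) = ord x * ord y"
proof -
  have sub: "subgroup (generate G {x \<otimes> y}) G"
    using xy by (intro generate_is_subgroup) simp
  have "x \<in> generate G {x \<otimes> y}" "y \<in> generate G {x \<otimes> y}"
    using mem_generate_mult_of_coprime[OF fin xy cop]
      mem_generate_mult_of_coprime[OF fin xy(2,1) xy(3)[symmetric]] cop xy(3)
    by (simp_all add: coprime_commute)
  then have "ord x dvd ord (x \<otimes> y)" "ord y dvd ord (x \<otimes> y)"
    using ord_dvd_card_subgroup[OF sub] generate_pow_card[of "x \<otimes> y"] xy by simp_all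
  then have "ord x * ord y dvd ord (x \<otimes> y)"
    using cop by (simp add: divides_mult)
  then show ?thesis
    using ord_mul_divides[OF xy(3,1,2)] by (simp add: dvd_antisym)
qed

lemma generate_insert_generate_eq_generate_mult:
  assumes fin: "finite (carrier G)" and xy: "x \<in> carrier G" "y \<in> carrier G" "x \<otimes> y = y \<otimes> x"
    and cop: "coprime (ord x) (ord y)"
  shows "generate G (insert y (generate G {x})) = generate G {x \<otimes> y}"
proof
  have sub: "subgroup (generate G {x \<otimes> y}) G"
    using xy by (intro generate_is_subgroup) simp
  have "x \<in> generate G {x \<otimes> y}" "y \<in> generate G {x \<otimes> y}"
    using mem_generate_mult_of_coprime[OF fin xy cop]
      mem_generate_mult_of_coprime[OF fin xy(2,1) xy(3)[symmetric]] cop xy(3)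
    by (simp_all add: coprime_commute)
  moreover have "generate G {x} \<subseteq> generate G {x \<otimes> y}"
    using sub \<open>x \<in> generate G {x \<otimes> y}\<close> by (intro generate_subgroup_incl) auto
  ultimately show "generate G (insert y (generate G {x})) \<subseteq> generate G {x \<otimes> y}"
    using sub by (intro generate_subgroup_incl) auto
  have gen_sub: "subgroup (generate G (insert y (generate G {x}))) G"
    using xy generate_incl[of "{x}"] by (intro generate_is_subgroup) auto
  have "x \<in> generate G (insert y (generate G {x}))" "y \<in> generate G (insert y (generate G {x}))"
    by (auto intro: generate.incl)
  then show "generate G {x \<otimes> y} \<subseteq> generate G (insert y (generate G {x}))"
    using gen_sub by (intro generate_subgroup_incl) (auto intro: subgroup.m_closed)
qed

lemma eq_of_mult_eq_mult_of_inter_trivial: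
  assumes VW: "subgroup V G" "subgroup W G" "V \<inter> W = {\<one>}"
    and a: "a \<in> V" "v \<in> V" and b: "b \<in> W" "w \<in> W" and eq: "a \<otimes> b = v \<otimes> w"
  shows "a = v" "b = w"
proof -
  have c: "a \<in> carrier G" "v \<in> carrier G" "b \<in> carrier G" "w \<in> carrier G"
    using VW a b subgroup.mem_carrier by metis+
  have "inv v \<otimes> a = inv v \<otimes> (a \<otimes> b) \<otimes> inv b"
    using c by (simp add: m_assoc)
  also have "\<dots> = w \<otimes> inv b"
    using c eq by (simp add: m_assoc)
  finally have eq': "inv v \<otimes> a = w \<otimes> inv b" .
  have "inv v \<otimes> a \<in> V"
    using VW a by (simp add: subgroup.m_closed subgroup.m_inv_closed)
  moreover have "inv v \<otimes> a \<in> W"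
    unfolding eq' using VW b by (simp add: subgroup.m_closed subgroup.m_inv_closed)
  ultimately have "inv v \<otimes> a = \<one>"
    using VW(3) by blast
  then show "a = v"
    using c by (metis inv_equality inv_inv inv_closed)
  then show "b = w"
    using eq c by simp
qed

lemma commute_inv:
  assumes "x \<in> carrier G" "g \<in> carrier G" "x \<otimes> g = g \<otimes> x"
  shows "inv x \<otimes> g = g \<otimes> inv x"
proof -
  have "inv x \<otimes> g = inv x \<otimes> (g \<otimes> x) \<otimes> inv x"
    using assms(1,2) by (simp add: m_assoc)
  also have "\<dots> = inv x \<otimes> (x \<otimes> g) \<otimes> inv x"
    using assms(3) by simp
  also have "\<dots> = g \<otimes> inv x"
    using assms(1,2) by (simp flip: m_assoc)
  finally show ?thesis .
qed

lemma card_conjugates_mult_card_centralizer: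
  assumes S: "subgroup S G" and g: "g \<in> S"
  shows "card {x \<otimes> g \<otimes> inv x | x. x \<in> S} * card {x \<in> S. x \<otimes> g = g \<otimes> x} = card S"
proof -
  interpret S: group "G\<lparr>carrier := S\<rparr>"
    using S is_group by (rule subgroup.subgroup_is_group)
  let ?\<phi> = "\<lambda>a. \<lambda>h \<in> carrier (G\<lparr>carrier := S\<rparr>). a \<otimes>\<^bsub>G\<lparr>carrier := S\<rparr>\<^esub> h \<otimes>\<^bsub>G\<lparr>carrier := S\<rparr>\<^esub> inv\<^bsub>G\<lparr>carrier := S\<rparr>\<^esub> a"
  have \<phi>: "?\<phi> x g = x \<otimes> g \<otimes> inv x" if "x \<in> S" for x
    using g S that by simp
  have "card (orbit (G\<lparr>carrier := S\<rparr>) ?\<phi> g) * card (stabilizer (G\<lparr>carrier := S\<rparr>) ?\<phi> g) = card S"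
    using group_action.orbit_stabilizer_theorem[OF S.action_by_conjugation] g by (simp add: order_def)
  moreover have "orbit (G\<lparr>carrier := S\<rparr>) ?\<phi> g = {x \<otimes> g \<otimes> inv x | x. x \<in> S}"
  proof
    show "orbit (G\<lparr>carrier := S\<rparr>) ?\<phi> g \<subseteq> {x \<otimes> g \<otimes> inv x | x. x \<in> S}"
      unfolding orbit_def using \<phi> g by auto
    show "{x \<otimes> g \<otimes> inv x | x. x \<in> S} \<subseteq> orbit (G\<lparr>carrier := S\<rparr>) ?\<phi> g"
    proof
      fix y
      assume "y \<in> {x \<otimes> g \<otimes> inv x | x. x \<in> S}"
      then obtain x where "x \<in> S" "y = ?\<phi> x g"
        using \<phi> by auto
      then show "y \<in> orbit (G\<lparr>carrier := S\<rparr>) ?\<phi> g"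
        unfolding orbit_def by auto
    qed
  qed
  moreover have "stabilizer (G\<lparr>carrier := S\<rparr>) ?\<phi> g = {x \<in> S. x \<otimes> g \<otimes> inv x = g}"
    unfolding stabilizer_def using \<phi> g by auto
  moreover have "x \<otimes> g \<otimes> inv x = g \<longleftrightarrow> x \<otimes> g = g \<otimes> x" if "x \<in> S" for x
    using subgroup.mem_carrier[OF S] g that by (intro inv_solve_right') auto
  then have "{x \<in> S. x \<otimes> g \<otimes> inv x = g} = {x \<in> S. x \<otimes> g = g \<otimes> x}"
    by blast
  ultimately show ?thesis
    by simp
qed

lemma subgroup_centralizer:
  assumes S: "subgroup S G" and g: "g \<in> carrier G"
  shows "subgroup {x \<in> S. x \<otimes> g = g \<otimes> x} G"
proof (rule subgroupI)
  have mem: "x \<in> carrier G" if "x \<in> S" for x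
    using S that by (rule subgroup.mem_carrier)
  then show "{x \<in> S. x \<otimes> g = g \<otimes> x} \<subseteq> carrier G"
    by blast
  show "{x \<in> S. x \<otimes> g = g \<otimes> x} \<noteq> {}"
    using S g subgroup.one_closed by fastforce
  fix a b
  assume a: "a \<in> {x \<in> S. x \<otimes> g = g \<otimes> x}" and b: "b \<in> {x \<in> S. x \<otimes> g = g \<otimes> x}"
  then show "inv a \<in> {x \<in> S. x \<otimes> g = g \<otimes> x}"
    using commute_inv mem g S subgroup.m_inv_closed by fastforce
  have "a \<otimes> b \<otimes> g = a \<otimes> (g \<otimes> b)"
    using a b mem g by (simp add: m_assoc)
  also have "\<dots> = g \<otimes> (a \<otimes> b)"
    using a b mem g by (simp flip: m_assoc)
  finally show "a \<otimes> b \<in> {x \<in> S. x \<otimes> g = g \<otimes> x}"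
    using a b S subgroup.m_closed by fastforce
qed

lemma card_eq_of_iso_integer_mod_group:
  assumes "G\<lparr>carrier := L\<rparr> \<cong> integer_mod_group n" "0 < n"
  shows "card L = n"
  using iso_same_card[OF assms(1)] assms(2) by (simp add: carrier_integer_mod_group)

lemma commute_of_iso_integer_mod_group:
  assumes L: "subgroup L G" "G\<lparr>carrier := L\<rparr> \<cong> integer_mod_group n" and ab: "a \<in> L" "b \<in> L"
  shows "a \<otimes> b = b \<otimes> a"
proof -
  have grp: "group (G\<lparr>carrier := L\<rparr>)"
    by (rule subgroup.subgroup_is_group[OF L(1) is_group])
  have "integer_mod_group n \<cong> G\<lparr>carrier := L\<rparr>"
    by (rule group.iso_sym[OF grp L(2)])
  then interpret L: comm_group "G\<lparr>carrier := L\<rparr>"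
    using comm_group.iso_imp_comm_group[OF abelian_integer_mod_group] group.is_monoid[OF grp] by blast
  show ?thesis
    using L.m_comm ab by simp
qed

lemma card_pow_eq_one_of_iso_integer_mod_group:
  assumes L: "subgroup L G" "G\<lparr>carrier := L\<rparr> \<cong> integer_mod_group n" and d: "d dvd n" "0 < n"
  shows "card {l \<in> L. l [^] d = \<one>} = d"
proof -
  obtain \<phi> where "\<phi> \<in> iso (G\<lparr>carrier := L\<rparr>) (integer_mod_group n)"
    using L(2) unfolding is_iso_def by blast
  then have "card {l \<in> L. l [^]\<^bsub>G\<lparr>carrier := L\<rparr>\<^esub> d = \<one>} = d"
    using card_pow_eq_one_iso subgroup.subgroup_is_group[OF L(1) is_group]
      card_pow_eq_zero_integer_mod_group[OF d] by fastforce
  then show ?thesis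
    by (simp flip: nat_pow_consistent)
qed

end

section \<open>Permutation groups on a finite set\<close>

locale finite_bij_group = group G for G :: "('a \<Rightarrow> 'a) monoid" (structure) +
  fixes \<Omega> :: "'a set"
  assumes BijGroup: "G = BijGroup \<Omega>"
    and finite_\<Omega>: "finite \<Omega>"
begin

lemma carrier_eq: "carrier G = Bij \<Omega>"
  by (simp add: BijGroup BijGroup_def)

lemma mult_apply: "g \<in> carrier G \<Longrightarrow> h \<in> carrier G \<Longrightarrow> \<beta> \<in> \<Omega> \<Longrightarrow> (g \<otimes> h) \<beta> = g (h \<beta>)"
  by (simp add: BijGroup BijGroup_def compose_def)

lemma one_apply: "\<beta> \<in> \<Omega> \<Longrightarrow> \<one> \<beta> = \<beta>"
  by (simp add: BijGroup BijGroup_def)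

lemma apply_in: "g \<in> carrier G \<Longrightarrow> \<beta> \<in> \<Omega> \<Longrightarrow> g \<beta> \<in> \<Omega>"
  by (auto simp: carrier_eq Bij_def bij_betw_def)

lemma inj_on_\<Omega>: "g \<in> carrier G \<Longrightarrow> inj_on g \<Omega>"
  by (auto simp: carrier_eq Bij_def bij_betw_def)

lemma inv_apply: "g \<in> carrier G \<Longrightarrow> \<beta> \<in> \<Omega> \<Longrightarrow> (inv g) (g \<beta>) = \<beta>"
  by (metis apply_in inv_closed l_inv mult_apply one_apply)

lemma conj_apply: "g \<in> carrier G \<Longrightarrow> x \<in> carrier G \<Longrightarrow> \<beta> \<in> \<Omega> \<Longrightarrow> (g \<otimes> x \<otimes> inv g) (g \<beta>) = g (x \<beta>)"
  by (simp add: mult_apply inv_apply apply_in)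

lemma apply_neq_of_fixed:
  "g \<in> carrier G \<Longrightarrow> g \<alpha> = \<alpha> \<Longrightarrow> \<alpha> \<in> \<Omega> \<Longrightarrow> \<beta> \<in> \<Omega> - {\<alpha>} \<Longrightarrow> g \<beta> \<in> \<Omega> - {\<alpha>}"
  by (metis DiffD1 DiffI apply_in inj_onD inj_on_\<Omega> singletonD singletonI)

lemma pow_apply_fixed: "g \<in> carrier G \<Longrightarrow> \<beta> \<in> \<Omega> \<Longrightarrow> g \<beta> = \<beta> \<Longrightarrow> (g [^] (n::nat)) \<beta> = \<beta>"
  by (induction n) (simp_all add: one_apply mult_apply)

lemma image_mult: "g \<in> carrier G \<Longrightarrow> h \<in> carrier G \<Longrightarrow> A \<subseteq> \<Omega> \<Longrightarrow> (g \<otimes> h) ` A = g ` h ` A"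
  by (auto simp: mult_apply image_image subset_iff intro!: image_cong)

lemma eq_one_of_fixes_all:
  assumes "g \<in> carrier G" "\<And>\<beta>. \<beta> \<in> \<Omega> \<Longrightarrow> g \<beta> = \<beta>"
  shows "g = \<one>"
proof (rule extensionalityI[of _ \<Omega>])
  show "g \<in> extensional \<Omega>" "\<one> \<in> extensional \<Omega>"
    using assms(1) one_closed by (simp_all add: carrier_eq Bij_def)
qed (simp add: assms(2) one_apply)

lemma finite_carrier: "finite (carrier G)"
proof (rule finite_subset)
  show "carrier G \<subseteq> \<Omega> \<rightarrow>\<^sub>E \<Omega>"
    by (auto simp: carrier_eq Bij_def bij_betw_def extensional_def)
  show "finite (\<Omega> \<rightarrow>\<^sub>E \<Omega>)"
    using finite_\<Omega> by (simp add: finite_PiE)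
qed

lemma subgroup_pstab:
  assumes S: "subgroup S G" and \<beta>: "\<beta> \<in> \<Omega>"
  shows "subgroup (pstab S \<beta>) G"
proof (rule subgroupI)
  have mem: "x \<in> carrier G" if "x \<in> S" for x
    using S that by (rule subgroup.mem_carrier)
  then show "pstab S \<beta> \<subseteq> carrier G"
    unfolding pstab_def by blast
  show "pstab S \<beta> \<noteq> {}"
    using subgroup.one_closed[OF S] one_apply[OF \<beta>] unfolding pstab_def by blast
  fix x y
  assume "x \<in> pstab S \<beta>" "y \<in> pstab S \<beta>"
  then show "inv x \<in> pstab S \<beta>" "x \<otimes> y \<in> pstab S \<beta>"
    using inv_apply[OF _ \<beta>, of x] mult_apply[OF _ _ \<beta>] mem S subgroup.m_inv_closed subgroup.m_closed
    unfolding pstab_def by fastforce+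
qed

lemma group_action_subgroup:
  assumes "subgroup S G"
  shows "group_action (G\<lparr>carrier := S\<rparr>) \<Omega> (\<lambda>s. s)"
  unfolding group_action_def group_hom_def group_hom_axioms_def
  using subgroup.subgroup_is_group[OF assms is_group] subgroup.subset[OF assms] group_BijGroup
  by (auto intro!: homI simp: BijGroup)

lemma card_orbit_mult_card_pstab:
  assumes S: "subgroup S G" and \<beta>: "\<beta> \<in> \<Omega>"
  shows "card {s \<beta> | s. s \<in> S} * card (pstab S \<beta>) = card S"
  using group_action.orbit_stabilizer_theorem[OF group_action_subgroup[OF S] \<beta>]
  by (simp add: orbit_def stabilizer_def pstab_def order_def)

lemma card_subgroup_dvd_of_semiregular:
  assumes S: "subgroup S G" and Y: "Y \<subseteq> \<Omega>" "\<And>s y. s \<in> S \<Longrightarrow> y \<in> Y \<Longrightarrow> s y \<in> Y"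
    and free: "\<And>y. y \<in> Y \<Longrightarrow> pstab S y = {\<one>}"
  shows "card S dvd card Y"
proof -
  interpret S: group_action "G\<lparr>carrier := S\<rparr>" \<Omega> "\<lambda>s. s"
    using S by (rule group_action_subgroup)
  define orb where "orb y = {s y | s. s \<in> S}" for y
  have card_orb: "card (orb y) = card S" if "y \<in> Y" for y
  proof -
    have "card (orb y) * card (pstab S y) = card S"
      unfolding orb_def using card_orbit_mult_card_pstab[OF S] that Y(1) by blast
    then show ?thesis
      using free[OF that] by simp
  qed
  have orbits: "orb y \<in> orbits (G\<lparr>carrier := S\<rparr>) \<Omega> (\<lambda>s. s)" if "y \<in> Y" for y
    unfolding orbits_def orbit_def orb_def using that Y(1) by auto
  have union: "\<Union> (orb ` Y) = Y"
  proof
    show "\<Union> (orb ` Y) \<subseteq> Y"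
      unfolding orb_def using Y(2) by blast
    have "y \<in> orb y" if "y \<in> Y" for y
    proof -
      have "\<one> y = y"
        using one_apply that Y(1) by blast
      then show ?thesis
        unfolding orb_def using subgroup.one_closed[OF S] by (auto intro!: exI[of _ \<one>])
    qed
    then show "Y \<subseteq> \<Union> (orb ` Y)"
      by blast
  qed
  have "finite Y"
    using Y(1) finite_\<Omega> by (rule finite_subset)
  have "card S * card (orb ` Y) = card (\<Union> (orb ` Y))"
  proof (rule card_partition)
    show "finite (orb ` Y)" "finite (\<Union> (orb ` Y))"
      using \<open>finite Y\<close> union by simp_all
    show "card c = card S" if "c \<in> orb ` Y" for c
      using that card_orb by blast
    show "c1 \<inter> c2 = {}" if "c1 \<in> orb ` Y" "c2 \<in> orb ` Y" "c1 \<noteq> c2" for c1 c2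
      using that S.disjoint_union orbits by blast
  qed
  then show ?thesis
    unfolding union by (metis dvd_triv_left)
qed

lemma fixed_of_mem_generate_prime:
  assumes s: "s \<in> carrier G" "Factorial_Ring.prime (ord s)"
    and d: "d \<in> generate G {s}" "d \<noteq> \<one>" and x: "x \<in> \<Omega>" "d x = x"
  shows "s x = x"
proof -
  have sub: "subgroup (generate G {s}) G"
    using s(1) by (intro generate_is_subgroup) simp
  have dc: "d \<in> carrier G"
    using sub d(1) by (rule subgroup.mem_carrier)
  have "generate G {d} = generate G {s}"
    using prime_card_subgroup_generate(2)[OF sub _ d] s generate_pow_card by simp
  then have "s \<in> generate G {d}"
    using generate.incl[of s "{s}" G] by simp
  then obtain n :: nat where "s = d [^] n"
    using generate_pow_nat[OF dc] ord_ge_1[OF finite_carrier dc] by auto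
  then show ?thesis
    using pow_apply_fixed[OF dc x] by simp
qed

lemma ord_dvd_card_moved_points:
  assumes s: "s \<in> carrier G" "Factorial_Ring.prime (ord s)"
  shows "ord s dvd card (\<Omega> - {\<beta> \<in> \<Omega>. s \<beta> = \<beta>})"
proof -
  have sub: "subgroup (generate G {s}) G"
    using s(1) by (intro generate_is_subgroup) simp
  have "card (generate G {s}) dvd card (\<Omega> - {\<beta> \<in> \<Omega>. s \<beta> = \<beta>})"
  proof (rule card_subgroup_dvd_of_semiregular[OF sub])
    show "\<Omega> - {\<beta> \<in> \<Omega>. s \<beta> = \<beta>} \<subseteq> \<Omega>"
      by blast
    fix d x
    assume d: "d \<in> generate G {s}" and x: "x \<in> \<Omega> - {\<beta> \<in> \<Omega>. s \<beta> = \<beta>}"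
    have dc: "d \<in> carrier G"
      using sub d by (rule subgroup.mem_carrier)
    have "s (d x) = d (s x)"
      using commute_of_mem_generate_singleton[OF s(1) d] mult_apply[OF dc s(1)] mult_apply[OF s(1) dc] x
      by auto
    moreover have "d (s x) \<noteq> d x"
      using inj_on_\<Omega>[OF dc] apply_in[OF s(1)] x by (auto dest: inj_onD)
    ultimately show "d x \<in> \<Omega> - {\<beta> \<in> \<Omega>. s \<beta> = \<beta>}"
      using apply_in[OF dc] x by auto
  next
    fix x
    assume x: "x \<in> \<Omega> - {\<beta> \<in> \<Omega>. s \<beta> = \<beta>}"
    have "d = \<one>" if "d \<in> pstab (generate G {s}) x" for d
      using fixed_of_mem_generate_prime[OF s, of d x] that x unfolding pstab_def by auto
    then show "pstab (generate G {s}) x = {\<one>}"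
      using subgroup.one_closed[OF subgroup_pstab[OF sub]] x by blast
  qed
  then show ?thesis
    using generate_pow_card[OF s(1)] by simp
qed

lemma block_image:
  assumes S: "subgroup S G" and B: "is_block \<Omega> S B" and g: "g \<in> S"
  shows "is_block \<Omega> S (g ` B)" "card (g ` B) = card B"
proof -
  have B\<Omega>: "B \<subseteq> \<Omega>"
    using B unfolding is_block_def by blast
  have mem: "x \<in> carrier G" if "x \<in> S" for x
    using S that by (rule subgroup.mem_carrier)
  show "card (g ` B) = card B"
    using inj_on_subset[OF inj_on_\<Omega>[OF mem[OF g]] B\<Omega>] by (rule card_image)
  show "is_block \<Omega> S (g ` B)"
    unfolding is_block_def
  proof (intro conjI ballI)
    show "g ` B \<subseteq> \<Omega>" "g ` B \<noteq> {}"
      using B B\<Omega> apply_in[OF mem[OF g]] unfolding is_block_def by auto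
    fix x
    assume x: "x \<in> S"
    define y where "y = inv g \<otimes> x \<otimes> g"
    have y: "y \<in> S"
      unfolding y_def using S x g by (simp add: subgroup.m_closed subgroup.m_inv_closed)
    have "x ` g ` B = (x \<otimes> g) ` B"
      using image_mult[OF mem[OF x] mem[OF g] B\<Omega>] by (rule sym)
    also have "x \<otimes> g = g \<otimes> y"
      unfolding y_def using mem x g by (simp flip: m_assoc)
    also have "(g \<otimes> y) ` B = g ` y ` B"
      using image_mult[OF mem[OF g] mem[OF y] B\<Omega>] .
    finally have xB: "x ` g ` B = g ` y ` B" .
    have "y ` B = B \<or> y ` B \<inter> B = {}"
      using B y unfolding is_block_def by blast
    moreover have "g ` (y ` B \<inter> B) = g ` y ` B \<inter> g ` B"
      using inj_on_\<Omega>[OF mem[OF g]] B\<Omega> apply_in[OF mem[OF y]]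
      by (intro inj_on_image_Int) auto
    ultimately show "x ` g ` B = g ` B \<or> x ` g ` B \<inter> g ` B = {}"
      unfolding xB by (metis image_empty)
  qed
qed

lemma block_containing:
  assumes S: "subgroup S G" "transitive_on \<Omega> S" and B: "is_block \<Omega> S B" and \<alpha>: "\<alpha> \<in> \<Omega>"
  obtains B' where "is_block \<Omega> S B'" "\<alpha> \<in> B'" "card B' = card B"
proof -
  obtain \<beta> where "\<beta> \<in> B" "\<beta> \<in> \<Omega>"
    using B unfolding is_block_def by blast
  then obtain g where "g \<in> S" "g \<beta> = \<alpha>"
    using S(2) \<alpha> unfolding transitive_on_def by blast
  then show ?thesis
    using that block_image[OF S(1) B] \<open>\<beta> \<in> B\<close> by blast
qed

lemma block_stable:
  assumes "is_block \<Omega> S B" "g \<in> S" "\<alpha> \<in> B" "g \<alpha> = \<alpha>" "x \<in> B"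
  shows "g x \<in> B"
proof -
  have "g ` B = B \<or> g ` B \<inter> B = {}"
    using assms(1,2) unfolding is_block_def by blast
  moreover have "\<alpha> \<in> g ` B \<inter> B"
    using assms(3,4) by (metis IntI image_eqI)
  ultimately show ?thesis
    using assms(5) by blast
qed

end

section \<open>Two-transitive groups with a regular normal subgroup\<close>

locale affine_two_transitive = finite_bij_group +
  fixes H N K :: "('a \<Rightarrow> 'a) set" and \<alpha> :: 'a
  assumes subgroup_H: "subgroup H G"
    and subgroup_N: "subgroup N G" and N_subset_H: "N \<subseteq> H"
    and N_normal: "\<And>h n. h \<in> H \<Longrightarrow> n \<in> N \<Longrightarrow> h \<otimes> n \<otimes> inv h \<in> N"
    and N_transitive: "\<And>\<beta>. \<beta> \<in> \<Omega> \<Longrightarrow> \<exists>n\<in>N. n \<alpha> = \<beta>"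
    and N_semiregular: "\<And>n. n \<in> N \<Longrightarrow> n \<alpha> = \<alpha> \<Longrightarrow> n = \<one>"
    and \<alpha>_in: "\<alpha> \<in> \<Omega>"
    and subgroup_K: "subgroup K G" and K_subset_H: "K \<subseteq> H"
    and K_normal: "\<And>h k. h \<in> H \<Longrightarrow> k \<in> K \<Longrightarrow> h \<otimes> k \<otimes> inv h \<in> K"
    and Ha_transitive: "\<And>\<beta> \<gamma>. \<beta> \<in> \<Omega> - {\<alpha>} \<Longrightarrow> \<gamma> \<in> \<Omega> - {\<alpha>} \<Longrightarrow> \<exists>h\<in>pstab H \<alpha>. h \<beta> = \<gamma>"
    and Ka_nontrivial: "pstab K \<alpha> \<noteq> {\<one>}"
begin

abbreviation "Ha \<equiv> pstab H \<alpha>"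
abbreviation "Ka \<equiv> pstab K \<alpha>"

lemma H_carrier: "h \<in> H \<Longrightarrow> h \<in> carrier G"
  and N_carrier: "n \<in> N \<Longrightarrow> n \<in> carrier G"
  and K_carrier: "k \<in> K \<Longrightarrow> k \<in> carrier G"
  using subgroup_H subgroup_N subgroup_K by (simp_all add: subgroup.mem_carrier)

lemma subgroup_Ha: "subgroup Ha G" and subgroup_Ka: "subgroup Ka G"
  using subgroup_H subgroup_K \<alpha>_in by (simp_all add: subgroup_pstab)

lemma Ha_carrier: "h \<in> Ha \<Longrightarrow> h \<in> carrier G" and Ka_carrier: "k \<in> Ka \<Longrightarrow> k \<in> carrier G"
  using subgroup_Ha subgroup_Ka by (simp_all add: subgroup.mem_carrier)

lemma Ka_subset_Ha: "Ka \<subseteq> Ha"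
  using K_subset_H unfolding pstab_def by blast

lemma conj_mem_Ka:
  assumes "h \<in> Ha" "k \<in> Ka"
  shows "h \<otimes> k \<otimes> inv h \<in> Ka"
proof -
  have "(h \<otimes> k \<otimes> inv h) \<alpha> = \<alpha>"
    using conj_apply[of h k \<alpha>] assms H_carrier K_carrier \<alpha>_in unfolding pstab_def by auto
  then show ?thesis
    using K_normal assms unfolding pstab_def by blast
qed

lemma N_eq_of_apply_eq:
  assumes "n \<in> N" "n' \<in> N" "n \<alpha> = n' \<alpha>"
  shows "n = n'"
proof -
  have "(inv n' \<otimes> n) \<alpha> = \<alpha>"
    using assms N_carrier \<alpha>_in by (simp add: mult_apply inv_apply)
  moreover have "inv n' \<otimes> n \<in> N"
    using assms subgroup_N by (simp add: subgroup.m_closed subgroup.m_inv_closed)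
  ultimately have "inv n' \<otimes> n = \<one>"
    by (rule N_semiregular[rotated])
  then show ?thesis
    using assms N_carrier by (metis inv_equality inv_inv inv_closed)
qed

lemma bij_betw_N: "bij_betw (\<lambda>n. n \<alpha>) N \<Omega>"
proof (rule bij_betw_imageI)
  show "inj_on (\<lambda>n. n \<alpha>) N"
    using N_eq_of_apply_eq by (auto intro: inj_onI)
  show "(\<lambda>n. n \<alpha>) ` N = \<Omega>"
    using N_transitive apply_in N_carrier \<alpha>_in by blast
qed

lemma card_N: "card N = card \<Omega>"
  using bij_betw_N by (rule bij_betw_same_card)

lemma N_apply_neq:
  assumes "n \<in> N" "n \<noteq> \<one>"
  shows "n \<alpha> \<in> \<Omega> - {\<alpha>}"
  using assms N_semiregular apply_in N_carrier \<alpha>_in by blast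

lemma conj_eq_iff_fixes:
  assumes h: "h \<in> Ha" and n: "n \<in> N"
  shows "h \<otimes> n \<otimes> inv h = n \<longleftrightarrow> h (n \<alpha>) = n \<alpha>"
proof -
  have "h \<in> H" "h \<alpha> = \<alpha>"
    using h unfolding pstab_def by auto
  then have "(h \<otimes> n \<otimes> inv h) \<alpha> = h (n \<alpha>)" "h \<otimes> n \<otimes> inv h \<in> N"
    using conj_apply[of h n \<alpha>] H_carrier N_carrier n \<alpha>_in N_normal by auto
  then show ?thesis
    using N_eq_of_apply_eq n by metis
qed

lemma commute_iff_fixes:
  assumes h: "h \<in> Ha" and n: "n \<in> N"
  shows "n \<otimes> h = h \<otimes> n \<longleftrightarrow> h (n \<alpha>) = n \<alpha>"
proof -
  have "h \<in> carrier G" "n \<in> carrier G"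
    using h n H_carrier N_carrier unfolding pstab_def by auto
  then have "h \<otimes> n \<otimes> inv h = n \<longleftrightarrow> n \<otimes> h = h \<otimes> n"
    by (subst inv_solve_right') auto
  then show ?thesis
    using conj_eq_iff_fixes[OF assms] by simp
qed

lemma Ha_conj_transitive:
  assumes "n \<in> N - {\<one>}" "n' \<in> N - {\<one>}"
  obtains h where "h \<in> Ha" "h \<otimes> n \<otimes> inv h = n'"
proof -
  obtain h where h: "h \<in> Ha" "h (n \<alpha>) = n' \<alpha>"
    using Ha_transitive N_apply_neq assms by (metis DiffE insertI1)
  then have "h \<in> H" "h \<alpha> = \<alpha>"
    unfolding pstab_def by auto
  then have "(h \<otimes> n \<otimes> inv h) \<alpha> = n' \<alpha>" "h \<otimes> n \<otimes> inv h \<in> N"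
    using conj_apply[of h n \<alpha>] h(2) H_carrier N_carrier assms \<alpha>_in N_normal by auto
  then show ?thesis
    using that h(1) N_eq_of_apply_eq assms by blast
qed

lemma K_inter_N_nontrivial: "K \<inter> N \<noteq> {\<one>}"
proof
  assume KN: "K \<inter> N = {\<one>}"
  have "k = \<one>" if k: "k \<in> Ka" for k
  proof -
    have kK: "k \<in> K" "k \<in> carrier G" "k \<in> Ha"
      using k Ka_subset_Ha K_carrier unfolding pstab_def by auto
    have "k (n \<alpha>) = n \<alpha>" if n: "n \<in> N" for n
    proof -
      have nc: "n \<in> carrier G"
        using n N_carrier by blast
      have "k \<otimes> n \<otimes> inv k \<in> N" "n \<otimes> inv k \<otimes> inv n \<in> K"
        using n kK N_normal K_normal K_subset_H N_subset_H subgroup.m_inv_closed[OF subgroup_K]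
        by auto
      then have "k \<otimes> n \<otimes> inv k \<otimes> inv n \<in> N" "k \<otimes> (n \<otimes> inv k \<otimes> inv n) \<in> K"
        using n kK subgroup_N subgroup_K by (simp_all add: subgroup.m_closed subgroup.m_inv_closed)
      moreover have "k \<otimes> (n \<otimes> inv k \<otimes> inv n) = k \<otimes> n \<otimes> inv k \<otimes> inv n"
        using kK(2) nc by (simp add: m_assoc)
      ultimately have "k \<otimes> n \<otimes> inv k \<otimes> inv n = \<one>"
        using KN by auto
      then have "k \<otimes> n \<otimes> inv k = n"
        using inv_solve_right'[of \<one> "k \<otimes> n \<otimes> inv k" n] kK(2) nc by simp
      then show ?thesis
        using conj_eq_iff_fixes[OF kK(3) n] by simp
    qed
    then have "\<And>\<beta>. \<beta> \<in> \<Omega> \<Longrightarrow> k \<beta> = \<beta>"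
      using N_transitive by metis
    then show ?thesis
      using eq_one_of_fixes_all kK(2) by blast
  qed
  then show False
    using Ka_nontrivial subgroup.one_closed[OF subgroup_Ka] by blast
qed

lemma N_subset_K: "N \<subseteq> K"
proof
  fix n
  assume n: "n \<in> N"
  obtain n0 where n0: "n0 \<in> K" "n0 \<in> N" "n0 \<noteq> \<one>"
    using K_inter_N_nontrivial subgroup.one_closed[OF subgroup_K] subgroup.one_closed[OF subgroup_N]
    by blast
  show "n \<in> K"
  proof (cases "n = \<one>")
    case True
    then show ?thesis
      using subgroup.one_closed[OF subgroup_K] by simp
  next
    case False
    then obtain h where "h \<in> Ha" "h \<otimes> n0 \<otimes> inv h = n"
      using Ha_conj_transitive[of n0 n] n n0 by blast
    then show ?thesis
      using K_normal n0(1) unfolding pstab_def by blast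
  qed
qed

lemma transitive_on_of_N_subset:
  assumes "N \<subseteq> S"
  shows "transitive_on \<Omega> S"
  unfolding transitive_on_def
proof (intro ballI)
  fix \<beta> \<gamma>
  assume \<beta>: "\<beta> \<in> \<Omega>" and "\<gamma> \<in> \<Omega>"
  then obtain n n' where n: "n \<in> N" "n \<alpha> = \<beta>" and n': "n' \<in> N" "n' \<alpha> = \<gamma>"
    using N_transitive by metis
  have "(n' \<otimes> inv n) \<beta> = n' ((inv n) \<beta>)"
    using mult_apply[OF _ _ \<beta>] n(1) n'(1) N_carrier by simp
  also have "(inv n) \<beta> = \<alpha>"
    using inv_apply[OF N_carrier[OF n(1)] \<alpha>_in] n(2) by simp
  finally have "(n' \<otimes> inv n) \<beta> = \<gamma>"
    using n'(2) by simp
  moreover have "n' \<otimes> inv n \<in> S"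
    using subgroup.m_closed[OF subgroup_N n'(1) subgroup.m_inv_closed[OF subgroup_N n(1)]] assms
    by blast
  ultimately show "\<exists>g\<in>S. g \<beta> = \<gamma>"
    by blast
qed

definition Ka_invariant :: "('a \<Rightarrow> 'a) set \<Rightarrow> bool" where
  "Ka_invariant U \<longleftrightarrow> subgroup U G \<and> U \<subseteq> N \<and> U \<noteq> {\<one>} \<and> (\<forall>k\<in>Ka. \<forall>u\<in>U. k \<otimes> u \<otimes> inv k \<in> U)"

lemma Ka_invariant_conj:
  assumes W: "Ka_invariant W" and h: "h \<in> Ha"
  shows "Ka_invariant (h <# W #> inv h)"
proof -
  have hc: "h \<in> carrier G" "h \<in> H"
    using h H_carrier unfolding pstab_def by auto
  have W': "subgroup W G" "W \<subseteq> N" "W \<noteq> {\<one>}" "\<And>k u. k \<in> Ka \<Longrightarrow> u \<in> W \<Longrightarrow> k \<otimes> u \<otimes> inv k \<in> W"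
    using W unfolding Ka_invariant_def by auto
  have Wc: "W \<subseteq> carrier G"
    using W'(1) by (rule subgroup.subset)
  have "subgroup (h <# W #> inv h) G"
    using hc(1) W'(1) by (rule subgroup_conjugation_is_surj2)
  moreover have "h <# W #> inv h \<subseteq> N"
    unfolding conj_coset_eq_image using W'(2) N_normal hc(2) by blast
  moreover have "h <# W #> inv h \<noteq> {\<one>}"
  proof
    assume "h <# W #> inv h = {\<one>}"
    also have "{\<one>} = h <# {\<one>} #> inv h"
      using hc(1) by (simp add: conj_coset_eq_image)
    finally show False
      using subgroup_conjugation_is_inj[OF hc(1) Wc] W'(3) by blast
  qed
  moreover have "k \<otimes> u \<otimes> inv k \<in> h <# W #> inv h" if k: "k \<in> Ka" and u: "u \<in> h <# W #> inv h" for k u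
  proof -
    obtain w where w: "w \<in> W" "u = h \<otimes> w \<otimes> inv h"
      using u unfolding mem_conj_coset by blast
    define k' where "k' = inv h \<otimes> k \<otimes> h"
    have "k' \<in> Ka"
      using conj_mem_Ka[OF subgroup.m_inv_closed[OF subgroup_Ha h] k] hc(1) unfolding k'_def by simp
    then have "k' \<otimes> w \<otimes> inv k' \<in> W"
      using W'(4) w(1) by blast
    moreover have "k \<in> carrier G" "w \<in> carrier G"
      using K_carrier k w(1) Wc unfolding pstab_def by auto
    then have "k \<otimes> u \<otimes> inv k = h \<otimes> (k' \<otimes> w \<otimes> inv k') \<otimes> inv h"
      unfolding w(2) k'_def using hc(1) by (simp add: m_assoc inv_mult_group)
    ultimately show ?thesis
      unfolding mem_conj_coset by blast
  qed
  ultimately show ?thesis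
    unfolding Ka_invariant_def by blast
qed

lemma Ka_invariant_eq_or_inter_trivial:
  assumes V: "Ka_invariant V" and W: "Ka_invariant W" and card: "card V = card W"
    and min: "\<forall>U. Ka_invariant U \<longrightarrow> card V \<le> card U"
  shows "V = W \<or> V \<inter> W = {\<one>}"
proof (rule ccontr)
  assume ne: "\<not> (V = W \<or> V \<inter> W = {\<one>})"
  have V': "subgroup V G" "V \<subseteq> N" "\<And>k u. k \<in> Ka \<Longrightarrow> u \<in> V \<Longrightarrow> k \<otimes> u \<otimes> inv k \<in> V"
    and W': "subgroup W G" "W \<subseteq> N" "\<And>k u. k \<in> Ka \<Longrightarrow> u \<in> W \<Longrightarrow> k \<otimes> u \<otimes> inv k \<in> W"
    using V W unfolding Ka_invariant_def by auto
  have "Ka_invariant (V \<inter> W)"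
    unfolding Ka_invariant_def using subgroups_Inter_pair[OF V'(1) W'(1)] V'(2,3) W'(3) ne by blast
  then have "card V \<le> card (V \<inter> W)"
    using min by blast
  moreover have "finite V" "finite W"
    using finite_carrier V'(1) W'(1) subgroup.subset finite_subset by metis+
  ultimately have "V \<inter> W = V" "V \<inter> W = W"
    using card by (metis Int_lower1 Int_lower2 card_mono card_subset_eq le_antisym)+
  then show False
    using ne by blast
qed

lemma mem_pstab_Ka_iff:
  assumes "k \<in> Ka" "n \<in> N"
  shows "k \<in> pstab Ka (n \<alpha>) \<longleftrightarrow> k \<otimes> n \<otimes> inv k = n"
  using conj_eq_iff_fixes[of k n] assms Ka_subset_Ha unfolding pstab_def by auto

lemma card_pstab_Ka_le:
  assumes \<beta>: "\<beta> \<in> \<Omega> - {\<alpha>}" and \<gamma>: "\<gamma> \<in> \<Omega> - {\<alpha>}"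
  shows "card (pstab Ka \<beta>) \<le> card (pstab Ka \<gamma>)"
proof -
  obtain h where h: "h \<in> Ha" "h \<beta> = \<gamma>"
    using Ha_transitive[OF \<beta> \<gamma>] by blast
  have hc: "h \<in> carrier G"
    using h(1) by (rule Ha_carrier)
  have Kac: "k \<in> carrier G" if "k \<in> Ka" for k
    using that by (rule Ka_carrier)
  have "(\<lambda>k. h \<otimes> k \<otimes> inv h) ` pstab Ka \<beta> \<subseteq> pstab Ka \<gamma>"
  proof
    fix x
    assume "x \<in> (\<lambda>k. h \<otimes> k \<otimes> inv h) ` pstab Ka \<beta>"
    then obtain k where k: "k \<in> Ka" "k \<beta> = \<beta>" "x = h \<otimes> k \<otimes> inv h"
      unfolding pstab_def by blast
    have "x \<in> Ka"
      using conj_mem_Ka[OF h(1) k(1)] k(3) by simp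
    moreover have "x \<gamma> = \<gamma>"
      using conj_apply[OF hc Kac[OF k(1)], of \<beta>] \<beta> h(2) k(2,3) by simp
    ultimately show "x \<in> pstab Ka \<gamma>"
      unfolding pstab_def by blast
  qed
  moreover have "inj_on (\<lambda>k. h \<otimes> k \<otimes> inv h) (pstab Ka \<beta>)"
    using conjugation_is_inj hc Kac unfolding pstab_def by (auto intro: inj_onI)
  moreover have "finite (pstab Ka \<gamma>)"
    using finite_carrier Kac unfolding pstab_def by (auto intro: finite_subset)
  ultimately show ?thesis
    by (metis card_inj_on_le)
qed

lemma card_pstab_Ka_eq:
  "\<beta> \<in> \<Omega> - {\<alpha>} \<Longrightarrow> \<gamma> \<in> \<Omega> - {\<alpha>} \<Longrightarrow> card (pstab Ka \<beta>) = card (pstab Ka \<gamma>)"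
  using card_pstab_Ka_le le_antisym by blast

lemma pstab_Ka_mult:
  assumes V: "Ka_invariant V" and W: "Ka_invariant W" and VW: "V \<inter> W = {\<one>}"
    and v: "v \<in> V" and w: "w \<in> W"
  shows "pstab Ka ((v \<otimes> w) \<alpha>) = pstab Ka (v \<alpha>) \<inter> pstab Ka (w \<alpha>)"
proof -
  have V': "subgroup V G" "V \<subseteq> N" "\<And>k u. k \<in> Ka \<Longrightarrow> u \<in> V \<Longrightarrow> k \<otimes> u \<otimes> inv k \<in> V"
    and W': "subgroup W G" "W \<subseteq> N" "\<And>k u. k \<in> Ka \<Longrightarrow> u \<in> W \<Longrightarrow> k \<otimes> u \<otimes> inv k \<in> W"
    using V W unfolding Ka_invariant_def by auto
  have vw: "v \<in> N" "w \<in> N" "v \<otimes> w \<in> N"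
    using v w V'(2) W'(2) subgroup.m_closed[OF subgroup_N] by auto
  have c: "v \<in> carrier G" "w \<in> carrier G"
    using vw N_carrier by auto
  have conj_mult: "k \<otimes> (v \<otimes> w) \<otimes> inv k = (k \<otimes> v \<otimes> inv k) \<otimes> (k \<otimes> w \<otimes> inv k)" if "k \<in> Ka" for k
  proof -
    have "k \<in> carrier G"
      using that by (rule Ka_carrier)
    then show ?thesis
      using c by (simp add: m_assoc)
  qed
  show ?thesis
  proof (intro equalityI subsetI)
    fix k
    assume k: "k \<in> pstab Ka ((v \<otimes> w) \<alpha>)"
    then have kKa: "k \<in> Ka"
      by (simp add: pstab_def)
    then have "(k \<otimes> v \<otimes> inv k) \<otimes> (k \<otimes> w \<otimes> inv k) = v \<otimes> w"
      using k mem_pstab_Ka_iff[OF kKa vw(3)] conj_mult[OF kKa] by simp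
    then have "k \<otimes> v \<otimes> inv k = v" "k \<otimes> w \<otimes> inv k = w"
      using eq_of_mult_eq_mult_of_inter_trivial[OF V'(1) W'(1) VW V'(3)[OF kKa v] v W'(3)[OF kKa w] w]
      by simp_all
    then show "k \<in> pstab Ka (v \<alpha>) \<inter> pstab Ka (w \<alpha>)"
      using mem_pstab_Ka_iff[OF kKa vw(1)] mem_pstab_Ka_iff[OF kKa vw(2)] by simp
  next
    fix k
    assume k: "k \<in> pstab Ka (v \<alpha>) \<inter> pstab Ka (w \<alpha>)"
    then have kKa: "k \<in> Ka"
      by (simp add: pstab_def)
    then have "k \<otimes> v \<otimes> inv k = v" "k \<otimes> w \<otimes> inv k = w"
      using k mem_pstab_Ka_iff[OF kKa vw(1)] mem_pstab_Ka_iff[OF kKa vw(2)] by simp_all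
    then show "k \<in> pstab Ka ((v \<otimes> w) \<alpha>)"
      using mem_pstab_Ka_iff[OF kKa vw(3)] conj_mult[OF kKa] by simp
  qed
qed

lemma pstab_Ka_eq_of_inter_trivial:
  assumes V: "Ka_invariant V" and W: "Ka_invariant W" and VW: "V \<inter> W = {\<one>}"
    and v: "v \<in> V - {\<one>}" and w: "w \<in> W - {\<one>}"
  shows "pstab Ka (v \<alpha>) = pstab Ka (w \<alpha>)"
proof -
  have V': "subgroup V G" "V \<subseteq> N" and W': "subgroup W G" "W \<subseteq> N"
    using V W unfolding Ka_invariant_def by auto
  have vw: "v \<in> N" "w \<in> N" "v \<otimes> w \<in> N"
    using v w V'(2) W'(2) subgroup.m_closed[OF subgroup_N] by auto
  have "v \<otimes> w \<noteq> \<one>"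
  proof
    assume "v \<otimes> w = \<one>"
    then have "w = inv v"
      using vw N_carrier by (metis inv_equality inv_inv inv_closed)
    then have "w \<in> V \<inter> W"
      using v w subgroup.m_inv_closed[OF V'(1)] by auto
    then show False
      using VW w by blast
  qed
  then have \<Omega>: "v \<alpha> \<in> \<Omega> - {\<alpha>}" "w \<alpha> \<in> \<Omega> - {\<alpha>}" "(v \<otimes> w) \<alpha> \<in> \<Omega> - {\<alpha>}"
    using N_apply_neq vw v w by auto
  have fin: "finite (pstab Ka (v \<alpha>))" "finite (pstab Ka (w \<alpha>))"
    using finite_carrier K_carrier unfolding pstab_def by (auto intro: finite_subset)
  have "pstab Ka ((v \<otimes> w) \<alpha>) = pstab Ka (v \<alpha>) \<inter> pstab Ka (w \<alpha>)"
    using pstab_Ka_mult[OF V W VW] v w by blast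
  moreover have "card (pstab Ka ((v \<otimes> w) \<alpha>)) = card (pstab Ka (v \<alpha>))"
    "card (pstab Ka ((v \<otimes> w) \<alpha>)) = card (pstab Ka (w \<alpha>))"
    using card_pstab_Ka_eq \<Omega> by blast+
  ultimately show ?thesis
    using fin by (metis Int_lower1 Int_lower2 card_subset_eq)
qed

lemma pstab_Ka_eq_of_minimal:
  assumes W: "Ka_invariant W" and min: "\<forall>V. Ka_invariant V \<longrightarrow> card W \<le> card V"
    and h: "h \<in> Ha" "h <# W #> inv h \<noteq> W"
    and v: "v \<in> (h <# W #> inv h) - {\<one>}" and w: "w \<in> W - {\<one>}"
  shows "pstab Ka (v \<alpha>) = pstab Ka (w \<alpha>)"
proof -
  have V: "Ka_invariant (h <# W #> inv h)"
    using W h(1) by (rule Ka_invariant_conj)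
  have "card (h <# W #> inv h) = card W"
    using h(1) H_carrier W subgroup.subset unfolding pstab_def Ka_invariant_def
    by (intro card_conj_coset) auto
  then have "(h <# W #> inv h) \<inter> W = {\<one>}"
    using Ka_invariant_eq_or_inter_trivial[OF V W] min h(2) by auto
  then show ?thesis
    using pstab_Ka_eq_of_inter_trivial[OF V W _ v w] by blast
qed

lemma pstab_Ka_constant:
  assumes U: "Ka_invariant U" "card U < card N"
  obtains C where "\<And>\<beta>. \<beta> \<in> \<Omega> - {\<alpha>} \<Longrightarrow> pstab Ka \<beta> = C"
proof -
  obtain W where W: "Ka_invariant W" and min: "\<forall>V. Ka_invariant V \<longrightarrow> card W \<le> card V"
    using ex_has_least_nat[of Ka_invariant U card] U(1) by blast
  have W': "subgroup W G" "W \<subseteq> N" "W \<noteq> {\<one>}"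
    using W unfolding Ka_invariant_def by auto
  \<comment> \<open>Each n outside W lies in an H_alpha-conjugate of W, which then meets W trivially.\<close>
  have outside: "pstab Ka (n \<alpha>) = pstab Ka (w \<alpha>)" if n: "n \<in> N - W" and w: "w \<in> W - {\<one>}" for n w
  proof -
    have "n \<noteq> \<one>"
      using n subgroup.one_closed[OF W'(1)] by blast
    then obtain h where h: "h \<in> Ha" "h \<otimes> w \<otimes> inv h = n"
      using Ha_conj_transitive[of w n] n w W'(2) by blast
    then have "n \<in> (h <# W #> inv h) - {\<one>}"
      using w \<open>n \<noteq> \<one>\<close> by (auto simp: mem_conj_coset)
    moreover from this have "h <# W #> inv h \<noteq> W"
      using n by blast
    ultimately show ?thesis
      using pstab_Ka_eq_of_minimal[OF W min h(1)] w by blast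
  qed
  have "W \<noteq> N"
    using min U by auto
  then obtain n1 where n1: "n1 \<in> N - W"
    using W'(2) by blast
  obtain w0 where w0: "w0 \<in> W - {\<one>}"
    using W'(3) subgroup.one_closed[OF W'(1)] by blast
  have "pstab Ka (n \<alpha>) = pstab Ka (w0 \<alpha>)" if n: "n \<in> N - {\<one>}" for n
  proof (cases "n \<in> W")
    case True
    then show ?thesis
      using outside[OF n1, of n] outside[OF n1 w0] n by simp
  next
    case False
    then show ?thesis
      using outside[OF _ w0] n by simp
  qed
  then have "pstab Ka \<beta> = pstab Ka (w0 \<alpha>)" if "\<beta> \<in> \<Omega> - {\<alpha>}" for \<beta>
    using N_transitive that one_apply \<alpha>_in by (metis DiffD1 DiffD2 DiffI singletonD singletonI)
  then show ?thesis
    using that by blast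
qed

definition block_subgroup :: "'a set \<Rightarrow> ('a \<Rightarrow> 'a) set" where
  "block_subgroup B = {n \<in> N. n \<alpha> \<in> B}"

lemma card_block_subgroup:
  assumes "B \<subseteq> \<Omega>"
  shows "card (block_subgroup B) = card B"
proof -
  have "bij_betw (\<lambda>n. n \<alpha>) (block_subgroup B) B"
  proof (rule bij_betw_subset[OF bij_betw_N])
    show "block_subgroup B \<subseteq> N"
      unfolding block_subgroup_def by blast
    show "(\<lambda>n. n \<alpha>) ` block_subgroup B = B"
      unfolding block_subgroup_def using N_transitive assms by blast
  qed
  then show ?thesis
    by (rule bij_betw_same_card)
qed

lemma subgroup_block_subgroup:
  assumes S: "subgroup S G" "N \<subseteq> S" and B: "is_block \<Omega> S B" "\<alpha> \<in> B"
  shows "subgroup (block_subgroup B) G"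
proof (rule subgroupI)
  have B\<Omega>: "B \<subseteq> \<Omega>"
    using B(1) unfolding is_block_def by blast
  have stable: "n ` B = B" if "n \<in> block_subgroup B" for n
  proof -
    have "n \<in> S" "n \<alpha> \<in> n ` B \<inter> B"
      using that S(2) B(2) unfolding block_subgroup_def by auto
    then show ?thesis
      using B(1) unfolding is_block_def by blast
  qed
  show "block_subgroup B \<subseteq> carrier G"
    unfolding block_subgroup_def using N_carrier by blast
  show "block_subgroup B \<noteq> {}"
    unfolding block_subgroup_def using subgroup.one_closed[OF subgroup_N] one_apply[OF \<alpha>_in] B(2) by auto
  fix a b
  assume a: "a \<in> block_subgroup B" and b: "b \<in> block_subgroup B"
  then have ab: "a \<in> N" "b \<in> N" "a \<in> carrier G" "b \<in> carrier G" "b \<alpha> \<in> B"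
    unfolding block_subgroup_def using N_carrier by auto
  obtain \<gamma> where "\<gamma> \<in> B" "a \<gamma> = \<alpha>"
    using stable[OF a] B(2) by (metis imageE)
  then have "(inv a) \<alpha> \<in> B"
    using inv_apply[OF ab(3)] B\<Omega> by auto
  then show "inv a \<in> block_subgroup B"
    unfolding block_subgroup_def using subgroup.m_inv_closed[OF subgroup_N ab(1)] by simp
  have "(a \<otimes> b) \<alpha> = a (b \<alpha>)"
    using mult_apply[OF ab(3,4) \<alpha>_in] .
  then have "(a \<otimes> b) \<alpha> \<in> B"
    using stable[OF a] ab(5) by auto
  then show "a \<otimes> b \<in> block_subgroup B"
    unfolding block_subgroup_def using subgroup.m_closed[OF subgroup_N ab(1,2)] by simp
qed

lemma card_block_dvd:
  assumes "subgroup S G" "N \<subseteq> S" "is_block \<Omega> S B" "\<alpha> \<in> B"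
  shows "card B dvd card \<Omega>"
proof -
  have "card (block_subgroup B) dvd card N"
    using subgroup_block_subgroup[OF assms] subgroup_N
    by (intro card_subgroup_dvd) (auto simp: block_subgroup_def)
  then show ?thesis
    using card_block_subgroup assms(3) card_N unfolding is_block_def by simp
qed

lemma exists_nontrivial_block:
  assumes "imprimitive_on \<Omega> K"
  obtains B where "is_block \<Omega> K B" "\<alpha> \<in> B" "1 < card B" "card B < card \<Omega>"
proof -
  obtain B0 where B0: "is_block \<Omega> K B0" "card B0 \<noteq> 1" "B0 \<noteq> \<Omega>"
    using assms unfolding imprimitive_on_def primitive_on_def by blast
  then have "B0 \<subset> \<Omega>" "B0 \<noteq> {}"
    unfolding is_block_def by auto
  moreover have "finite B0"
    using \<open>B0 \<subset> \<Omega>\<close> finite_\<Omega> finite_subset by blast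
  ultimately have "1 < card B0" "card B0 < card \<Omega>"
    using B0(2) finite_\<Omega> psubset_card_mono by (auto simp: Suc_lessI card_gt_0_iff)
  moreover obtain B where "is_block \<Omega> K B" "\<alpha> \<in> B" "card B = card B0"
    using block_containing[OF subgroup_K transitive_on_of_N_subset[OF N_subset_K] B0(1) \<alpha>_in] by blast
  ultimately show ?thesis
    using that by simp
qed

lemma Ka_invariant_block_subgroup:
  assumes B: "is_block \<Omega> K B" "\<alpha> \<in> B" "1 < card B"
  shows "Ka_invariant (block_subgroup B)"
  unfolding Ka_invariant_def
proof (intro conjI ballI)
  show "subgroup (block_subgroup B) G"
    using subgroup_block_subgroup[OF subgroup_K N_subset_K B(1,2)] .
  show "block_subgroup B \<subseteq> N"
    unfolding block_subgroup_def by blast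
  show "block_subgroup B \<noteq> {\<one>}"
    using card_block_subgroup[of B] B(1,3) unfolding is_block_def by force
  fix k u
  assume k: "k \<in> Ka" and u: "u \<in> block_subgroup B"
  then have "k \<in> H" "k \<in> K" "k \<alpha> = \<alpha>" "u \<in> N" "u \<alpha> \<in> B"
    using K_subset_H unfolding pstab_def block_subgroup_def by auto
  moreover have "(k \<otimes> u \<otimes> inv k) \<alpha> = k (u \<alpha>)"
    using conj_apply[of k u \<alpha>] calculation K_carrier N_carrier \<alpha>_in by auto
  ultimately show "k \<otimes> u \<otimes> inv k \<in> block_subgroup B"
    unfolding block_subgroup_def using N_normal block_stable[OF B(1)] B(2) by auto
qed

lemma Ka_semiregular:
  assumes imp: "imprimitive_on \<Omega> K" and \<beta>: "\<beta> \<in> \<Omega> - {\<alpha>}"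
  shows "pstab Ka \<beta> = {\<one>}"
proof -
  obtain B where B: "is_block \<Omega> K B" "\<alpha> \<in> B" "1 < card B" "card B < card \<Omega>"
    using exists_nontrivial_block[OF imp] by blast
  have "card (block_subgroup B) < card N"
    using card_block_subgroup B(1,4) card_N unfolding is_block_def by simp
  then obtain C where C: "\<And>\<gamma>. \<gamma> \<in> \<Omega> - {\<alpha>} \<Longrightarrow> pstab Ka \<gamma> = C"
    using pstab_Ka_constant Ka_invariant_block_subgroup[OF B(1-3)] by blast
  have "k = \<one>" if k: "k \<in> pstab Ka \<beta>" for k
  proof (rule eq_one_of_fixes_all)
    show "k \<in> carrier G"
      using k K_carrier unfolding pstab_def by auto
    show "k \<gamma> = \<gamma>" if "\<gamma> \<in> \<Omega>" for \<gamma>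
      using C[of \<gamma>] C[OF \<beta>] k that unfolding pstab_def by (cases "\<gamma> = \<alpha>") auto
  qed
  then show ?thesis
    using subgroup.one_closed[OF subgroup_pstab[OF subgroup_Ka]] \<beta> by blast
qed

lemma card_Ka_dvd:
  assumes "imprimitive_on \<Omega> K" "Y \<subseteq> \<Omega> - {\<alpha>}" "\<And>k y. k \<in> Ka \<Longrightarrow> y \<in> Y \<Longrightarrow> k y \<in> Y"
  shows "card Ka dvd card Y"
proof (rule card_subgroup_dvd_of_semiregular[OF subgroup_Ka])
  show "Y \<subseteq> \<Omega>"
    using assms(2) by blast
  show "\<And>k y. k \<in> Ka \<Longrightarrow> y \<in> Y \<Longrightarrow> k y \<in> Y"
    by (rule assms(3))
  show "\<And>y. y \<in> Y \<Longrightarrow> pstab Ka y = {\<one>}"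
    using Ka_semiregular[OF assms(1)] assms(2) by blast
qed

lemma pstab_apply_neq:
  assumes "g \<in> pstab S \<alpha>" "subgroup S G" "\<beta> \<in> \<Omega> - {\<alpha>}"
  shows "g \<beta> \<in> \<Omega> - {\<alpha>}"
proof -
  have "g \<in> carrier G" "g \<alpha> = \<alpha>"
    using assms(1) subgroup.mem_carrier[OF assms(2)] unfolding pstab_def by auto
  then show ?thesis
    using apply_neq_of_fixed \<alpha>_in assms(3) by blast
qed

lemma card_Ka_dvd_fixed_points:
  assumes imp: "imprimitive_on \<Omega> K" and s: "s \<in> carrier G" and comm: "\<And>k. k \<in> Ka \<Longrightarrow> s \<otimes> k = k \<otimes> s"
  shows "card Ka dvd card ({\<beta> \<in> \<Omega>. s \<beta> = \<beta>} - {\<alpha>})"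
proof (rule card_Ka_dvd[OF imp])
  show "{\<beta> \<in> \<Omega>. s \<beta> = \<beta>} - {\<alpha>} \<subseteq> \<Omega> - {\<alpha>}"
    by blast
  fix k y
  assume k: "k \<in> Ka" and y: "y \<in> {\<beta> \<in> \<Omega>. s \<beta> = \<beta>} - {\<alpha>}"
  have kc: "k \<in> carrier G"
    using k by (rule Ka_carrier)
  have "s (k y) = (k \<otimes> s) y"
    using comm[OF k] mult_apply[OF s kc] y by simp
  also have "\<dots> = k y"
    using mult_apply[OF kc s] y by simp
  finally show "k y \<in> {\<beta> \<in> \<Omega>. s \<beta> = \<beta>} - {\<alpha>}"
    using pstab_apply_neq[OF k subgroup_K] y by auto
qed

lemma card_Ha_conjugates:
  assumes g: "g \<in> Ka" "g \<noteq> \<one>"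
  shows "0 < card {x \<otimes> g \<otimes> inv x | x. x \<in> Ha}" "card {x \<otimes> g \<otimes> inv x | x. x \<in> Ha} < card Ka"
proof -
  have gc: "g \<in> carrier G"
    using g(1) by (rule Ka_carrier)
  have "x \<otimes> g \<otimes> inv x \<in> Ka - {\<one>}" if x: "x \<in> Ha" for x
  proof -
    have xc: "x \<in> carrier G"
      using x by (rule Ha_carrier)
    have "x \<otimes> g \<otimes> inv x \<noteq> \<one>"
    proof
      assume "x \<otimes> g \<otimes> inv x = \<one>"
      then have "x \<otimes> g = x"
        using inv_solve_right'[of \<one> "x \<otimes> g" x] xc gc by simp
      then show False
        using xc gc g(2) by simp
    qed
    then show ?thesis
      using conj_mem_Ka[OF x g(1)] by blast
  qed
  then have sub: "{x \<otimes> g \<otimes> inv x | x. x \<in> Ha} \<subseteq> Ka - {\<one>}"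
    by auto
  have fin: "finite Ka"
    using finite_subset[OF subgroup.subset[OF subgroup_Ka] finite_carrier] .
  then have "card {x \<otimes> g \<otimes> inv x | x. x \<in> Ha} \<le> card (Ka - {\<one>})"
    using sub by (simp add: card_mono)
  also have "\<dots> < card Ka"
    using fin subgroup.one_closed[OF subgroup_Ka] by (rule card_Diff1_less)
  finally show "card {x \<otimes> g \<otimes> inv x | x. x \<in> Ha} < card Ka" .
  have "g = \<one> \<otimes> g \<otimes> inv \<one>"
    using gc by simp
  then have "g \<in> {x \<otimes> g \<otimes> inv x | x. x \<in> Ha}"
    using subgroup.one_closed[OF subgroup_Ha] by blast
  then show "0 < card {x \<otimes> g \<otimes> inv x | x. x \<in> Ha}"
    using sub fin by (auto simp: card_gt_0_iff intro: finite_subset)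
qed

lemma card_fixed_points_dvd:
  assumes s: "s \<in> Ha"
  shows "card {\<beta> \<in> \<Omega>. s \<beta> = \<beta>} dvd card \<Omega>"
proof -
  define C where "C = {n \<in> N. n \<otimes> s = s \<otimes> n}"
  have "s \<in> carrier G"
    using s by (rule Ha_carrier)
  then have "subgroup C G"
    unfolding C_def using subgroup_N by (rule subgroup_centralizer[rotated])
  then have "card C dvd card N"
    using subgroup_N by (rule card_subgroup_dvd) (auto simp: C_def)
  moreover have "bij_betw (\<lambda>n. n \<alpha>) C {\<beta> \<in> \<Omega>. s \<beta> = \<beta>}"
  proof (rule bij_betw_subset[OF bij_betw_N])
    show "C \<subseteq> N"
      unfolding C_def by blast
    show "(\<lambda>n. n \<alpha>) ` C = {\<beta> \<in> \<Omega>. s \<beta> = \<beta>}"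
    proof (intro equalityI subsetI)
      fix \<beta>
      assume "\<beta> \<in> (\<lambda>n. n \<alpha>) ` C"
      then obtain n where "n \<in> N" "n \<otimes> s = s \<otimes> n" "\<beta> = n \<alpha>"
        unfolding C_def by blast
      then show "\<beta> \<in> {\<beta> \<in> \<Omega>. s \<beta> = \<beta>}"
        using commute_iff_fixes[OF s] apply_in[OF N_carrier \<alpha>_in] by simp
    next
      fix \<beta>
      assume \<beta>: "\<beta> \<in> {\<beta> \<in> \<Omega>. s \<beta> = \<beta>}"
      then obtain n where n: "n \<in> N" "n \<alpha> = \<beta>"
        using N_transitive by blast
      then have "n \<in> C"
        unfolding C_def using commute_iff_fixes[OF s n(1)] \<beta> by simp
      then show "\<beta> \<in> (\<lambda>n. n \<alpha>) ` C"
        using n(2) by blast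
    qed
  qed
  then have "card C = card {\<beta> \<in> \<Omega>. s \<beta> = \<beta>}"
    by (rule bij_betw_same_card)
  ultimately show ?thesis
    using card_N by simp
qed

end

section \<open>Degree 64\<close>

locale affine_two_transitive_64 = affine_two_transitive +
  assumes card_\<Omega>: "card \<Omega> = 64"
begin

lemma card_\<Omega>_minus_\<alpha>: "card (\<Omega> - {\<alpha>}) = 63"
  using card_\<Omega> \<alpha>_in finite_\<Omega> by simp

lemma card_Ka_eq_3_or_7:
  assumes imp: "imprimitive_on \<Omega> K"
  shows "card Ka = 3 \<or> card Ka = 7"
proof -
  obtain B where B: "is_block \<Omega> K B" "\<alpha> \<in> B" "1 < card B" "card B < card \<Omega>"
    using exists_nontrivial_block[OF imp] by blast
  have "B \<subseteq> \<Omega>"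
    using B(1) unfolding is_block_def by blast
  have "card Ka dvd card (\<Omega> - {\<alpha>})"
    using card_Ka_dvd[OF imp] pstab_apply_neq[OF _ subgroup_K] by blast
  moreover have "card Ka dvd card (B - {\<alpha>})"
  proof (rule card_Ka_dvd[OF imp])
    show "B - {\<alpha>} \<subseteq> \<Omega> - {\<alpha>}"
      using \<open>B \<subseteq> \<Omega>\<close> by blast
    fix k y
    assume "k \<in> Ka" "y \<in> B - {\<alpha>}"
    then show "k y \<in> B - {\<alpha>}"
      using block_stable[OF B(1), of k] B(2) pstab_apply_neq[OF _ subgroup_K, of k y] \<open>B \<subseteq> \<Omega>\<close>
      unfolding pstab_def by blast
  qed
  moreover have "card B dvd 64"
    using card_block_dvd[OF subgroup_K N_subset_K B(1,2)] card_\<Omega> by simp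
  ultimately have "card Ka \<in> {1, 3, 7}"
    using divisor_of_63_dvd_pred_of_dvd_64[of "card B" "card Ka"] B(2-4) card_\<Omega> card_\<Omega>_minus_\<alpha> by simp
  moreover have "card Ka \<noteq> 1"
    using Ka_nontrivial subgroup.one_closed[OF subgroup_Ka] by (metis card_1_singletonE singletonD)
  ultimately show ?thesis
    by blast
qed

lemma Ka_generator:
  assumes imp: "imprimitive_on \<Omega> K"
  obtains g where "g \<in> Ka" "g \<noteq> \<one>" "ord g = card Ka" "generate G {g} = Ka"
proof -
  obtain g where g: "g \<in> Ka" "g \<noteq> \<one>"
    using Ka_nontrivial subgroup.one_closed[OF subgroup_Ka] by blast
  moreover have "Factorial_Ring.prime (card Ka)"
    using card_Ka_eq_3_or_7[OF imp] by auto
  ultimately show ?thesis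
    using that prime_card_subgroup_generate[OF subgroup_Ka] by blast
qed

lemma Ka_iso_integer_mod_group:
  assumes imp: "imprimitive_on \<Omega> K"
  shows "G\<lparr>carrier := Ka\<rparr> \<cong> integer_mod_group (card Ka)"
proof -
  obtain g where g: "g \<in> Ka" "ord g = card Ka" "generate G {g} = Ka"
    using Ka_generator[OF imp] by blast
  moreover have "0 < ord g"
    using g(2) card_Ka_eq_3_or_7[OF imp] by auto
  ultimately show ?thesis
    using generate_iso_integer_mod_group[of g] Ka_carrier by simp
qed

lemma card_Ha_dvd: "63 dvd card Ha"
proof -
  obtain \<beta> where \<beta>: "\<beta> \<in> \<Omega> - {\<alpha>}"
    using card_\<Omega>_minus_\<alpha> by (metis card.empty ex_in_conv zero_neq_numeral)
  have "{h \<beta> | h. h \<in> Ha} = \<Omega> - {\<alpha>}"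
    using pstab_apply_neq[OF _ subgroup_H \<beta>] Ha_transitive[OF \<beta>] by blast
  then have "63 * card (pstab Ha \<beta>) = card Ha"
    using card_orbit_mult_card_pstab[OF subgroup_Ha, of \<beta>] \<beta> card_\<Omega>_minus_\<alpha> by simp
  then show ?thesis
    by (metis dvd_triv_left)
qed

lemma exists_commuting_of_ord:
  assumes imp: "imprimitive_on \<Omega> K" and g: "g \<in> Ka" "g \<noteq> \<one>"
  obtains y where "y \<in> Ha" "y \<otimes> g = g \<otimes> y" "ord y = 21 div card Ka"
proof -
  have gHa: "g \<in> Ha" "g \<in> carrier G"
    using g(1) Ka_subset_Ha K_carrier unfolding pstab_def by auto
  define C where "C = {x \<in> Ha. x \<otimes> g = g \<otimes> x}"
  have "card {x \<otimes> g \<otimes> inv x | x. x \<in> Ha} * card C = card Ha"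
    unfolding C_def using card_conjugates_mult_card_centralizer[OF subgroup_Ha gHa(1)] .
  then have "63 dvd card {x \<otimes> g \<otimes> inv x | x. x \<in> Ha} * card C"
    using card_Ha_dvd by simp
  then have "21 div card Ka dvd card C"
    using div_21_dvd_of_63_dvd_mult card_Ha_conjugates[OF g] card_Ka_eq_3_or_7[OF imp] by blast
  moreover have "Factorial_Ring.prime (21 div card Ka)"
    using card_Ka_eq_3_or_7[OF imp] by auto
  moreover have "subgroup C G"
    unfolding C_def using subgroup_Ha gHa(2) by (rule subgroup_centralizer)
  ultimately have "\<exists>y\<in>C. ord y = 21 div card Ka"
    using exists_ord_eq_prime[OF finite_carrier] by blast
  then show ?thesis
    using that unfolding C_def by blast
qed

lemma exists_iso_integer_mod_group_21:
  assumes imp: "imprimitive_on \<Omega> K"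
  shows "\<exists>x\<in>Ha. G\<lparr>carrier := generate G (insert x Ka)\<rparr> \<cong> integer_mod_group 21"
proof -
  obtain g where g: "g \<in> Ka" "g \<noteq> \<one>" "ord g = card Ka" "generate G {g} = Ka"
    using Ka_generator[OF imp] by blast
  obtain y where y: "y \<in> Ha" "y \<otimes> g = g \<otimes> y" "ord y = 21 div card Ka"
    using exists_commuting_of_ord[OF imp g(1,2)] by blast
  have c: "g \<in> carrier G" "y \<in> carrier G"
    using g(1) y(1) Ka_carrier Ha_carrier by auto
  have ord: "ord g * ord y = 21" "coprime (ord g) (ord y)"
    using card_Ka_eq_3_or_7[OF imp] g(3) y(3) by (auto simp: coprime_iff_gcd_eq_1 gcd_non_0_nat)
  have "generate G (insert y Ka) = generate G {g \<otimes> y}"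
    using generate_insert_generate_eq_generate_mult[OF finite_carrier c y(2)[symmetric] ord(2)] g(4)
    by simp
  moreover have "ord (g \<otimes> y) = 21"
    using ord_mult_of_coprime[OF finite_carrier c y(2)[symmetric] ord(2)] ord(1) by simp
  then have "G\<lparr>carrier := generate G {g \<otimes> y}\<rparr> \<cong> integer_mod_group 21"
    using generate_iso_integer_mod_group[of "g \<otimes> y"] c by simp
  ultimately have "G\<lparr>carrier := generate G (insert y Ka)\<rparr> \<cong> integer_mod_group 21"
    by simp
  then show ?thesis
    using y(1) by blast
qed

lemma fixed_points_eq_singleton:
  assumes imp: "imprimitive_on \<Omega> K" and s: "s \<in> Ha" "s \<noteq> \<one>" "s [^] (21 div card Ka) = \<one>"
    and comm: "\<And>k. k \<in> Ka \<Longrightarrow> s \<otimes> k = k \<otimes> s"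
  shows "{\<beta> \<in> \<Omega>. s \<beta> = \<beta>} = {\<alpha>}"
proof -
  define F where "F = {\<beta> \<in> \<Omega>. s \<beta> = \<beta>}"
  have sc: "s \<in> carrier G" "s \<alpha> = \<alpha>"
    using s(1) H_carrier unfolding pstab_def by auto
  have F: "F \<subseteq> \<Omega>" "\<alpha> \<in> F" "finite F"
    unfolding F_def using sc(2) \<alpha>_in finite_\<Omega> by auto
  have ord: "ord s = 21 div card Ka" "Factorial_Ring.prime (21 div card Ka)"
    using ord_eq_prime[OF sc(1) s(2,3)] card_Ka_eq_3_or_7[OF imp] by auto
  have "card Ka dvd card (F - {\<alpha>})"
    unfolding F_def using card_Ka_dvd_fixed_points[OF imp sc(1) comm] .
  moreover have "21 div card Ka dvd card (\<Omega> - F)"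
    unfolding F_def using ord_dvd_card_moved_points[OF sc(1)] ord by simp
  moreover have "card F dvd 64"
    unfolding F_def using card_fixed_points_dvd[OF s(1)] card_\<Omega> by simp
  ultimately have "card F = 1 \<or> card F = 64"
    using dvd_64_trivial_of_dvd_pred_and_dvd_compl[of "card F" "card Ka" "21 div card Ka"]
      card_Ka_eq_3_or_7[OF imp] F card_\<Omega> by (auto simp: card_Diff_subset)
  moreover have "card F \<noteq> 64"
  proof
    assume "card F = 64"
    then have "F = \<Omega>"
      using F(1) card_\<Omega> finite_\<Omega> by (simp add: card_subset_eq)
    then have "s = \<one>"
      using eq_one_of_fixes_all[OF sc(1)] unfolding F_def by blast
    then show False
      using s(2) by simp
  qed
  ultimately show ?thesis
    using F(2) unfolding F_def[symmetric] by (metis card_1_singletonE singletonD)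
qed

lemma subgroup_generate_insert_Ka: "x \<in> Ha \<Longrightarrow> subgroup (generate G (insert x Ka)) G"
  using Ha_carrier Ka_carrier by (intro generate_is_subgroup) auto

lemma Ka_eq_pow_eq_one:
  assumes imp: "imprimitive_on \<Omega> K" and x: "x \<in> Ha"
    and iso: "G\<lparr>carrier := generate G (insert x Ka)\<rparr> \<cong> integer_mod_group 21"
  shows "Ka = {l \<in> generate G (insert x Ka). l [^] card Ka = \<one>}"
proof (rule card_subset_eq)
  let ?L = "generate G (insert x Ka)"
  have sub: "subgroup ?L G"
    using x by (rule subgroup_generate_insert_Ka)
  show "finite {l \<in> ?L. l [^] card Ka = \<one>}"
    using finite_carrier subgroup.subset[OF sub] by (auto intro: finite_subset)
  show "Ka \<subseteq> {l \<in> ?L. l [^] card Ka = \<one>}"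
  proof
    fix k
    assume k: "k \<in> Ka"
    then have "k [^] card Ka = \<one>"
      using ord_dvd_card_subgroup[OF subgroup_Ka k] pow_eq_id K_carrier unfolding pstab_def by auto
    then show "k \<in> {l \<in> ?L. l [^] card Ka = \<one>}"
      using k generate.incl[of k "insert x Ka" G] by simp
  qed
  show "card Ka = card {l \<in> ?L. l [^] card Ka = \<one>}"
    using card_pow_eq_one_of_iso_integer_mod_group[OF sub iso, of "card Ka"] card_Ka_eq_3_or_7[OF imp]
    by auto
qed

lemma generate_insert_Ka_semiregular:
  assumes imp: "imprimitive_on \<Omega> K" and x: "x \<in> Ha"
    and iso: "G\<lparr>carrier := generate G (insert x Ka)\<rparr> \<cong> integer_mod_group 21"
    and \<beta>: "\<beta> \<in> \<Omega> - {\<alpha>}"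
  shows "pstab (generate G (insert x Ka)) \<beta> = {\<one>}"
proof -
  let ?L = "generate G (insert x Ka)"
  have sub: "subgroup ?L G"
    using x by (rule subgroup_generate_insert_Ka)
  have L_Ha: "?L \<subseteq> Ha"
    using x Ka_subset_Ha by (intro generate_subgroup_incl subgroup_Ha) auto
  have Ka_L: "Ka \<subseteq> ?L"
    by (auto intro: generate.incl)
  have "l = \<one>" if l: "l \<in> ?L" "l \<beta> = \<beta>" for l
  proof (rule ccontr)
    assume "l \<noteq> \<one>"
    have lc: "l \<in> carrier G"
      using sub l(1) by (rule subgroup.mem_carrier)
    have "ord l dvd 21"
      using ord_dvd_card_subgroup[OF sub l(1)] card_eq_of_iso_integer_mod_group[OF iso] by simp
    then have "(l [^] (21 div card Ka)) [^] card Ka = \<one>"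
      using card_Ka_eq_3_or_7[OF imp] lc by (auto simp: nat_pow_pow pow_eq_id)
    then have "l [^] (21 div card Ka) \<in> Ka"
      using Ka_eq_pow_eq_one[OF imp x iso] subgroup_nat_pow_closed[OF sub l(1)] by blast
    moreover have "(l [^] (21 div card Ka)) \<beta> = \<beta>"
      using pow_apply_fixed[OF lc _ l(2)] \<beta> by blast
    ultimately have "l [^] (21 div card Ka) = \<one>"
      using Ka_semiregular[OF imp \<beta>] unfolding pstab_def by blast
    moreover have "l \<otimes> k = k \<otimes> l" if "k \<in> Ka" for k
      using commute_of_iso_integer_mod_group[OF sub iso l(1)] Ka_L that by blast
    ultimately have "{\<gamma> \<in> \<Omega>. l \<gamma> = \<gamma>} = {\<alpha>}"
      using fixed_points_eq_singleton[OF imp _ \<open>l \<noteq> \<one>\<close>] L_Ha l(1) by blast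
    then show False
      using l(2) \<beta> by blast
  qed
  then show ?thesis
    using subgroup.one_closed[OF subgroup_pstab[OF sub]] \<beta> unfolding pstab_def by auto
qed

lemma card_block_generate_insert_K:
  assumes imp: "imprimitive_on \<Omega> K" and x: "x \<in> Ha"
    and iso: "G\<lparr>carrier := generate G (insert x Ka)\<rparr> \<cong> integer_mod_group 21"
    and B: "is_block \<Omega> (generate G (insert x K)) B" "\<alpha> \<in> B"
  shows "card B = 1 \<or> card B = 64"
proof -
  let ?L = "generate G (insert x Ka)" and ?S = "generate G (insert x K)"
  have sub: "subgroup ?S G"
    using x K_carrier H_carrier unfolding pstab_def by (intro generate_is_subgroup) auto
  have N_S: "N \<subseteq> ?S"
    using N_subset_K by (auto intro: generate.incl)
  have L_S: "?L \<subseteq> pstab ?S \<alpha>"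
    using x by (intro generate_subgroup_incl subgroup_pstab[OF sub \<alpha>_in])
      (auto simp: pstab_def intro: generate.incl)
  have B\<Omega>: "B \<subseteq> \<Omega>"
    using B(1) unfolding is_block_def by auto
  have "card ?L dvd card (B - {\<alpha>})"
  proof (rule card_subgroup_dvd_of_semiregular)
    show "subgroup ?L G"
      using x by (rule subgroup_generate_insert_Ka)
    show "B - {\<alpha>} \<subseteq> \<Omega>"
      using B\<Omega> by blast
    fix l y
    assume "l \<in> ?L" and y: "y \<in> B - {\<alpha>}"
    then have "l \<in> pstab ?S \<alpha>"
      using L_S by blast
    then show "l y \<in> B - {\<alpha>}"
      using block_stable[OF B(1), of l \<alpha> y] B(2) pstab_apply_neq[OF _ sub, of l y] y B\<Omega>
      unfolding pstab_def by blast
  next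
    fix y
    assume "y \<in> B - {\<alpha>}"
    then show "pstab ?L y = {\<one>}"
      using generate_insert_Ka_semiregular[OF imp x iso] B\<Omega> by blast
  qed
  then have "21 dvd card B - 1"
    using card_eq_of_iso_integer_mod_group[OF iso] B(2) by simp
  moreover have "card B dvd 64"
    using card_block_dvd[OF sub N_S B] card_\<Omega> by simp
  ultimately show ?thesis
    using dvd_64_trivial_of_21_dvd_pred by blast
qed

lemma primitive_generate_insert_K:
  assumes imp: "imprimitive_on \<Omega> K" and x: "x \<in> Ha"
    and iso: "G\<lparr>carrier := generate G (insert x Ka)\<rparr> \<cong> integer_mod_group 21"
  shows "primitive_on \<Omega> (generate G (insert x K))"
proof -
  let ?S = "generate G (insert x K)"
  have sub: "subgroup ?S G"
    using x K_carrier H_carrier unfolding pstab_def by (intro generate_is_subgroup) auto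
  have trans: "transitive_on \<Omega> ?S"
    using N_subset_K by (intro transitive_on_of_N_subset) (auto intro: generate.incl)
  have "card B = 1 \<or> B = \<Omega>" if B: "is_block \<Omega> ?S B" for B
  proof -
    obtain B' where B': "is_block \<Omega> ?S B'" "\<alpha> \<in> B'" "card B' = card B"
      using block_containing[OF sub trans B \<alpha>_in] by blast
    then have "card B = 1 \<or> card B = card \<Omega>"
      using card_block_generate_insert_K[OF imp x iso B'(1,2)] card_\<Omega> by simp
    moreover have "B \<subseteq> \<Omega>"
      using B unfolding is_block_def by auto
    ultimately show ?thesis
      using finite_\<Omega> card_subset_eq by blast
  qed
  then show ?thesis
    unfolding primitive_on_def using trans by blast
qed

end

lemma normal_perm_gr_conj:
  assumes H: "subgroup H (BijGroup \<Omega>)" and N: "N \<lhd> perm_gr \<Omega> H" and "h \<in> H" "n \<in> N"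
  shows "h \<otimes>\<^bsub>BijGroup \<Omega>\<^esub> n \<otimes>\<^bsub>BijGroup \<Omega>\<^esub> inv\<^bsub>BijGroup \<Omega>\<^esub> h \<in> N"
proof -
  have "h \<otimes>\<^bsub>perm_gr \<Omega> H\<^esub> n \<otimes>\<^bsub>perm_gr \<Omega> H\<^esub> inv\<^bsub>perm_gr \<Omega> H\<^esub> h \<in> N"
    using normal.inv_op_closed2[OF N] assms(3,4) by (simp add: perm_gr_def)
  moreover have "inv\<^bsub>perm_gr \<Omega> H\<^esub> h = inv\<^bsub>BijGroup \<Omega>\<^esub> h"
    unfolding perm_gr_def using group.m_inv_consistent[OF group_BijGroup H assms(3)] .
  ultimately show ?thesis
    by (simp add: perm_gr_def)
qed

lemma normal_perm_gr_subgroup: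
  assumes H: "subgroup H (BijGroup \<Omega>)" and N: "N \<lhd> perm_gr \<Omega> H"
  shows "subgroup N (BijGroup \<Omega>)" "N \<subseteq> H"
proof -
  have "subgroup N (perm_gr \<Omega> H)"
    using N by (rule normal_imp_subgroup)
  then show "subgroup N (BijGroup \<Omega>)" "N \<subseteq> H"
    using group.incl_subgroup[OF group_BijGroup H] subgroup.subset unfolding perm_gr_def by fastforce+
qed

lemma affine_two_transitive_64I:
  assumes affine: "affine_perm_group_2_6 \<Omega> H" and two: "two_transitive_on \<Omega> H"
    and K: "K \<lhd> perm_gr \<Omega> H" and Ka: "pstab K \<alpha> \<noteq> {\<one>\<^bsub>BijGroup \<Omega>\<^esub>}" and \<alpha>: "\<alpha> \<in> \<Omega>"
  obtains N where "affine_two_transitive_64 (BijGroup \<Omega>) \<Omega> H N K \<alpha>"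
proof -
  obtain N where fin: "finite \<Omega>" "card \<Omega> = 64" and H: "subgroup H (BijGroup \<Omega>)"
    and N: "N \<lhd> perm_gr \<Omega> H" and reg: "regular_on \<Omega> N"
    using affine unfolding affine_perm_group_2_6_def perm_group_def by auto
  have "affine_two_transitive_64 (BijGroup \<Omega>) \<Omega> H N K \<alpha>"
  proof (intro affine_two_transitive_64.intro affine_two_transitive.intro finite_bij_group.intro
      affine_two_transitive_64_axioms.intro affine_two_transitive_axioms.intro finite_bij_group_axioms.intro)
    show "group (BijGroup \<Omega>)"
      by (rule group_BijGroup)
    show "subgroup N (BijGroup \<Omega>)" "N \<subseteq> H"
      using normal_perm_gr_subgroup[OF H N] by auto
    show "subgroup K (BijGroup \<Omega>)" "K \<subseteq> H"
      using normal_perm_gr_subgroup[OF H K] by auto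
    show "\<And>h n. h \<in> H \<Longrightarrow> n \<in> N \<Longrightarrow> h \<otimes>\<^bsub>BijGroup \<Omega>\<^esub> n \<otimes>\<^bsub>BijGroup \<Omega>\<^esub> inv\<^bsub>BijGroup \<Omega>\<^esub> h \<in> N"
      using normal_perm_gr_conj[OF H N] .
    show "\<And>h k. h \<in> H \<Longrightarrow> k \<in> K \<Longrightarrow> h \<otimes>\<^bsub>BijGroup \<Omega>\<^esub> k \<otimes>\<^bsub>BijGroup \<Omega>\<^esub> inv\<^bsub>BijGroup \<Omega>\<^esub> h \<in> K"
      using normal_perm_gr_conj[OF H K] .
    show "\<And>\<beta>. \<beta> \<in> \<Omega> \<Longrightarrow> \<exists>n\<in>N. n \<alpha> = \<beta>"
      using reg \<alpha> unfolding regular_on_def transitive_on_def by blast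
    show "\<And>n. n \<in> N \<Longrightarrow> n \<alpha> = \<alpha> \<Longrightarrow> n = \<one>\<^bsub>BijGroup \<Omega>\<^esub>"
      using reg \<alpha> unfolding regular_on_def pstab_def by blast
    show "\<And>\<beta> \<gamma>. \<beta> \<in> \<Omega> - {\<alpha>} \<Longrightarrow> \<gamma> \<in> \<Omega> - {\<alpha>} \<Longrightarrow> \<exists>h\<in>pstab H \<alpha>. h \<beta> = \<gamma>"
      using two \<alpha> unfolding two_transitive_on_def pstab_def
      by (metis (mono_tags, lifting) DiffE mem_Collect_eq singletonI)
  qed (use fin H \<alpha> Ka in auto)
  then show ?thesis
    using that by blast
qed

theorem lemma3p3:
  fixes \<Omega> :: "'a set" and H K :: "('a \<Rightarrow> 'a) set"
  assumes "affine_perm_group_2_6 \<Omega> H"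
    and "two_transitive_on \<Omega> H"
    and "K \<lhd> perm_gr \<Omega> H"
    and "K \<noteq> {\<one>\<^bsub>BijGroup \<Omega>\<^esub>}"
    and "\<forall>\<alpha>\<in>\<Omega>. pstab K \<alpha> \<noteq> {\<one>\<^bsub>BijGroup \<Omega>\<^esub>}"
    and "imprimitive_on \<Omega> K"
  shows "\<forall>\<alpha>\<in>\<Omega>.
      (\<exists>s\<in>{3,7}. perm_gr \<Omega> (pstab K \<alpha>) \<cong> integer_mod_group s)
    \<and> (\<exists>x\<in>pstab H \<alpha>. perm_gr \<Omega> (gen_perm \<Omega> (insert x (pstab K \<alpha>))) \<cong> integer_mod_group 21)
    \<and> (\<forall>x\<in>pstab H \<alpha>. perm_gr \<Omega> (gen_perm \<Omega> (insert x (pstab K \<alpha>))) \<cong> integer_mod_group 21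
          \<longrightarrow> primitive_on \<Omega> (gen_perm \<Omega> (insert x K)))"
proof
  fix \<alpha>
  assume \<alpha>: "\<alpha> \<in> \<Omega>"
  obtain N where "affine_two_transitive_64 (BijGroup \<Omega>) \<Omega> H N K \<alpha>"
    using affine_two_transitive_64I[OF assms(1-3) _ \<alpha>] assms(5) \<alpha> by blast
  then interpret affine_two_transitive_64 "BijGroup \<Omega>" \<Omega> H N K \<alpha> .
  show "(\<exists>s\<in>{3,7}. perm_gr \<Omega> (pstab K \<alpha>) \<cong> integer_mod_group s)
    \<and> (\<exists>x\<in>pstab H \<alpha>. perm_gr \<Omega> (gen_perm \<Omega> (insert x (pstab K \<alpha>))) \<cong> integer_mod_group 21)
    \<and> (\<forall>x\<in>pstab H \<alpha>. perm_gr \<Omega> (gen_perm \<Omega> (insert x (pstab K \<alpha>))) \<cong> integer_mod_group 21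
          \<longrightarrow> primitive_on \<Omega> (gen_perm \<Omega> (insert x K)))"
    using Ka_iso_integer_mod_group[OF assms(6)] card_Ka_eq_3_or_7[OF assms(6)]
      exists_iso_integer_mod_group_21[OF assms(6)] primitive_generate_insert_K[OF assms(6)]
    unfolding perm_gr_def gen_perm_def by auto
qed

end
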